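(* Consider the setting below (agents ${\cal N}$, action sets ${\cal V}_i$, in-neighborhoods ${\cal N}_i$, delays $d_i$, objectives $f_t$, $t\in[T]$), and let every agent $i\in{\cal N}$ run the algorithm DOG below, producing actions $\{a_{i,t}\}_{t\in[T]}$, with ${\cal A}_t=\{a_{i,t}\}_{i\in{\cal N}}$. Then \[ \mathbb{E}\left[f_t({\cal A}_t)\right] \geq \frac{1}{1+\kappa_f}\, \mathbb{E}\left[f_t({\cal A}^{\star})\right] - \frac{\kappa_f}{1+\kappa_f}\sum_{i\in{\cal N}} \mathbb{E} \left[\mathrm{coin}_{f_t,i}({\cal N}_{i})\right] - \tilde{O}\left(|{\cal N}|\sqrt{\overline{|{\cal V}|+d}\,/\,T}\right), \] where $\kappa_f\triangleq\max_{t\in[T]}\kappa_{f_t}$ and $\overline{|{\cal V}|+d}\triangleq\max_{i\in{\cal N}}(|{\cal V}_i|+d_i)$. In particular, when the network is fully centralized, i.e. ${\cal N}_i={\cal N}\setminus\{i\}$ for all $i$, \[ \mathbb{E}\left[f_t({\cal A}_t)\right] \geq \frac{1}{1+\kappa_f}\,\mathbb{E}\left[f_t({\cal A}^{\star})\right] - \tilde{O}\left(|{\cal N}|\sqrt{\overline{|{\cal V}|+d}\,/\,T}\right), \] and when the network is fully decentralized, i.e. ${\cal N}_i=\emptyset$ for all $i$, \[ \mathbb{E}\left[f_t({\cal A}_t)\right] \geq (1-\kappa_f)\,\mathbb{E}\left[f_t({\cal A}^{\star})\right] - \tilde{O}\left(|{\cal N}|\sqrt{\overline{|{\cal V}|+d}\,/\,T}\right).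 \]
   Context: Setting. ${\cal N}$ is a finite set of agents; each agent $i$ has a finite action set ${\cal V}_i$; $[T]=\{1,\dots,T\}$. Agents communicate over a directed graph ${\cal G}=({\cal N},{\cal E})$, which may be disconnected. ${\cal N}_i$ (agent $i$'s neighborhood) is the set of agents from which $i$ can receive information, possibly via multi-hop communication; it is constant over $[T]$. The communication delay $d_i$ is the number of edges from the furthest multi-hop in-neighbor to $i$; information (in particular the actions $\{a_{j,t}\}_{j\in{\cal N}_i}$ chosen at time $t$) reaches $i$ at time $t+d_i$. For each $t$, $f_t$ is a set function on subsets of the (disjoint) union of the ${\cal V}_i$ which is: normalized ($f_t(\emptyset)=0$); non-decreasing ($f_t({\cal A})\le f_t({\cal B})$ for ${\cal A}\subseteq{\cal B}$); submodular ($f_t(s\mid{\cal A})\ge f_t(s\mid{\cal B})$ for ${\cal A}\subseteq{\cal B}$, where $f(s\mid{\cal A})\triangleq f({\cal A}\cup\{s\})-f({\cal A})$); and 2nd-order submodular ($f_t(s\mid{\cal C})-f_t(s\mid{\cal A}\cup{\cal C})\ge f_t(s\mid{\cal B}\cup{\cal C})-f_t(s\mid{\cal A}\cup{\cal B}\cup{\cal C})$ for disjoint ${\cal A},{\cal B},{\cal C}$ and any $s$). The functions $f_t$ are unknown a priori; agent $i$ can evaluate $f_t({\cal A})$ for ${\cal A}\subseteq\{a_{i,t}\}\cup\{a_{j,t}\}_{j\in{\cal N}_i}$ only after time $t+d_i$. The goal is to maximize $\sum_{t=1}^T f_t(\{a_{i,t}\}_{i\in{\cal N}})$. Algorithm DOG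 (run by each agent $i$): set $\eta_i=\sqrt{\log|{\cal V}_i|/[(|{\cal V}_i|+d_i)T]}$ and weights $w_{a,1}=1$ for all $a\in{\cal V}_i$. For each $t\in[T]$: form $p_t=w_t/\|w_t\|_1$; draw $a_{i,t}\in{\cal V}_i$ from $p_t$; broadcast $a_{i,t}$ (possibly via multi-hop relaying); receive neighbors' actions $\{a_{j,s}\}_{j\in{\cal N}_i}$ for $s$ with $s+d_i=t$; compute $r_{a_{i,s},s}=f_s(a_{i,s}\mid\{a_{j,s}\}_{j\in{\cal N}_i})$ normalized to $[0,1]$; for all $a\in{\cal V}_i$ set $\hat r_{a,s}=1-\frac{\mathbf{1}(a_{i,s}=a)}{p_{a,s}}(1-r_{a_{i,s},s})$ and $w_{a,t+1}=w_{a,t}\exp(\eta_i\hat r_{a,s})$. Notation. ${\cal A}^{\star}\in\arg\max_{a_i\in{\cal V}_i,\,\forall i\in{\cal N}}\sum_{t=1}^T f_t(\{a_i\}_{i\in{\cal N}})$ is an optimal (time-invariant) joint action. Curvature of a normalized submodular $f$ on ground set ${\cal V}$: $\kappa_f\triangleq 1-\min_{v\in{\cal V}}[f({\cal V})-f({\cal V}\setminus\{v\})]/f(v)$. Centralization of information at time $t$: $\mathrm{coin}_{f_t,i}({\cal N}_i)\triangleq f_t(a_{i,t})-f_t(a_{i,t}\mid\{a_{j,t}\}_{j\in{\cal N}_i^c})$, where ${\cal N}_i^c$ is the complement of ${\cal N}_i$ in ${\cal N}\setminus\{i\}$. The expectation $\mathbb{E}$ is with respect to DOG's internal randomness (the paper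 uses $\mathbb{E}[f_t(\cdot)]$ as the expectation of the time average $\frac1T\sum_{t=1}^T f_t(\cdot)$), and $\tilde O(\cdot)$ hides logarithmic factors. *)

theory Defs
  imports "HOL-Analysis.Analysis" "HOL-Probability.Probability"
begin

text \<open>Agent i has a finite nonempty action set V i (a set of naturals); the ground set of
  the objectives is the disjoint union of the action sets, realised as the set of pairs
  (i, v) with i in N and v in V i.  A joint action is a function a from agents to
  actions; the corresponding set of chosen elements for the agents in S is Act S a.
  A history H maps a time step t to the joint action H t chosen at time t.\<close>

definition ground :: "nat set \<Rightarrow> (nat \<Rightarrow> nat set) \<Rightarrow> (nat \<times> nat) set" where
  "ground N V = Sigma N V"

definition Act :: "nat set \<Rightarrow> (nat \<Rightarrow> nat) \<Rightarrow> (nat \<times> nat) set" where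
  "Act S a = (\<lambda>i. (i, a i)) ` S"

definition marg :: "((nat \<times> nat) set \<Rightarrow> real) \<Rightarrow> nat \<times> nat \<Rightarrow> (nat \<times> nat) set \<Rightarrow> real" where
  "marg g s A = g (A \<union> {s}) - g A"

definition normalized :: "((nat \<times> nat) set \<Rightarrow> real) \<Rightarrow> bool" where
  "normalized g \<longleftrightarrow> g {} = 0"

definition nondecreasing_on :: "(nat \<times> nat) set \<Rightarrow> ((nat \<times> nat) set \<Rightarrow> real) \<Rightarrow> bool" where
  "nondecreasing_on Om g \<longleftrightarrow> (\<forall>A B. A \<subseteq> B \<and> B \<subseteq> Om \<longrightarrow> g A \<le> g B)"

definition submodular_on :: "(nat \<times> nat) set \<Rightarrow> ((nat \<times> nat) set \<Rightarrow> real) \<Rightarrow> bool" where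
  "submodular_on Om g \<longleftrightarrow>
     (\<forall>A B s. A \<subseteq> B \<and> B \<subseteq> Om \<and> s \<in> Om \<longrightarrow> marg g s A \<ge> marg g s B)"

definition second_order_submodular_on :: "(nat \<times> nat) set \<Rightarrow> ((nat \<times> nat) set \<Rightarrow> real) \<Rightarrow> bool" where
  "second_order_submodular_on Om g \<longleftrightarrow>
     (\<forall>A B C s. A \<subseteq> Om \<and> B \<subseteq> Om \<and> C \<subseteq> Om \<and> s \<in> Om \<and>
        A \<inter> B = {} \<and> A \<inter> C = {} \<and> B \<inter> C = {} \<longrightarrow>
        marg g s C - marg g s (A \<union> C) \<ge> marg g s (B \<union> C) - marg g s (A \<union> B \<union> C))"

text \<open>Elements with g {v} = 0 are excluded (standard
  convention, the ratio is undefined for them); if there is no such element the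
  curvature is 0.\<close>
definition curvature :: "(nat \<times> nat) set \<Rightarrow> ((nat \<times> nat) set \<Rightarrow> real) \<Rightarrow> real" where
  "curvature Om g =
     (let R = {(g Om - g (Om - {v})) / g {v} | v. v \<in> Om \<and> g {v} > 0}
      in if R = {} then 0 else 1 - Min R)"

definition kappa :: "nat set \<Rightarrow> (nat \<Rightarrow> nat set) \<Rightarrow> nat \<Rightarrow> (nat \<Rightarrow> (nat \<times> nat) set \<Rightarrow> real) \<Rightarrow> real" where
  "kappa N V T f = Max ((\<lambda>t. curvature (ground N V) (f t)) ` {1..T})"

definition coin :: "nat set \<Rightarrow> (nat \<Rightarrow> nat set) \<Rightarrow> ((nat \<times> nat) set \<Rightarrow> real) \<Rightarrow> nat \<Rightarrow> (nat \<Rightarrow> nat) \<Rightarrow> real" where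
  "coin N Nb g i a = g {(i, a i)} - marg g (i, a i) (Act (N - {i} - Nb i) a)"

definition dog_eta :: "(nat \<Rightarrow> nat set) \<Rightarrow> (nat \<Rightarrow> nat) \<Rightarrow> nat \<Rightarrow> nat \<Rightarrow> real" where
  "dog_eta V d T i = sqrt (ln (real (card (V i))) / ((real (card (V i)) + real (d i)) * real T))"

text \<open>Weights w_{a,t} of agent i at time t (t \<ge> 1) given the history H.
  w_{a,1} = 1; at the end of step t, if s = t - d i \<ge> 1, agent i has received the
  neighbours' actions at time s and sets w_{a,t+1} = w_{a,t} exp(eta_i rhat_{a,s}), with
  rhat_{a,s} = 1 - 1(a_{i,s} = a) / p_{a,s} (1 - r_s), r_s = f_s(a_{i,s} | neighbours' actions
  at s) / M (M being the normalising upper bound making r_s lie in [0,1]);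
  otherwise w_{a,t+1} = w_{a,t}.  The weight at time t only depends on H at times
  at most t - 1 - d i.\<close>
fun dog_w :: "(nat \<Rightarrow> nat set) \<Rightarrow> (nat \<Rightarrow> nat set) \<Rightarrow> (nat \<Rightarrow> nat) \<Rightarrow> nat \<Rightarrow>
    (nat \<Rightarrow> (nat \<times> nat) set \<Rightarrow> real) \<Rightarrow> real \<Rightarrow> nat \<Rightarrow> (nat \<Rightarrow> nat \<Rightarrow> nat) \<Rightarrow> nat \<Rightarrow> nat \<Rightarrow> real"
where
  "dog_w V Nb d T f M i H 0 a = 1"
| "dog_w V Nb d T f M i H (Suc t) a =
     dog_w V Nb d T f M i H t a *
     (if d i + 1 \<le> t then
        exp (dog_eta V d T i *
          (1 - (if H (t - d i) i = a
                then (\<Sum>c\<in>V i. dog_w V Nb d T f M i H (t - d i) c) / dog_w V Nb d T f M i H (t - d i) a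
                else 0)
               * (1 - marg (f (t - d i)) (i, H (t - d i) i) (Act (Nb i) (H (t - d i))) / M)))
      else 1)"

definition dog_p :: "(nat \<Rightarrow> nat set) \<Rightarrow> (nat \<Rightarrow> nat set) \<Rightarrow> (nat \<Rightarrow> nat) \<Rightarrow> nat \<Rightarrow>
    (nat \<Rightarrow> (nat \<times> nat) set \<Rightarrow> real) \<Rightarrow> real \<Rightarrow> nat \<Rightarrow> (nat \<Rightarrow> nat \<Rightarrow> nat) \<Rightarrow> nat \<Rightarrow> nat pmf"
where
  "dog_p V Nb d T f M i H t =
     embed_pmf (\<lambda>a. if a \<in> V i
                     then dog_w V Nb d T f M i H t a / (\<Sum>b\<in>V i. dog_w V Nb d T f M i H t b)
                     else 0)"

text \<open>Distribution of the history after the first t steps of DOG run by all agents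
  in N: at each step every agent draws its action independently from its own
  distribution.  (Entries of the history for agents outside N, or times > t, are 0.)\<close>
fun dog_traj :: "nat set \<Rightarrow> (nat \<Rightarrow> nat set) \<Rightarrow> (nat \<Rightarrow> nat set) \<Rightarrow> (nat \<Rightarrow> nat) \<Rightarrow> nat \<Rightarrow>
    (nat \<Rightarrow> (nat \<times> nat) set \<Rightarrow> real) \<Rightarrow> real \<Rightarrow> nat \<Rightarrow> (nat \<Rightarrow> nat \<Rightarrow> nat) pmf"
where
  "dog_traj N V Nb d T f M 0 = return_pmf (\<lambda>_ _. 0)"
| "dog_traj N V Nb d T f M (Suc t) =
     bind_pmf (dog_traj N V Nb d T f M t)
       (\<lambda>H. map_pmf (\<lambda>A. H(Suc t := A))
              (Pi_pmf N 0 (\<lambda>i. dog_p V Nb d T f M i H (Suc t))))"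

definition dog_E :: "nat set \<Rightarrow> (nat \<Rightarrow> nat set) \<Rightarrow> (nat \<Rightarrow> nat set) \<Rightarrow> (nat \<Rightarrow> nat) \<Rightarrow> nat \<Rightarrow>
    (nat \<Rightarrow> (nat \<times> nat) set \<Rightarrow> real) \<Rightarrow> real \<Rightarrow> ((nat \<Rightarrow> nat \<Rightarrow> nat) \<Rightarrow> nat \<Rightarrow> real) \<Rightarrow> real"
where
  "dog_E N V Nb d T f M F =
     measure_pmf.expectation (dog_traj N V Nb d T f M T)
       (\<lambda>H. (1 / real T) * (\<Sum>t\<in>{1..T}. F H t))"

definition dog_setting :: "nat set \<Rightarrow> (nat \<Rightarrow> nat set) \<Rightarrow> (nat \<Rightarrow> nat set) \<Rightarrow> (nat \<Rightarrow> nat) \<Rightarrow> nat \<Rightarrow>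
    (nat \<Rightarrow> (nat \<times> nat) set \<Rightarrow> real) \<Rightarrow> real \<Rightarrow> (nat \<Rightarrow> nat) \<Rightarrow> bool"
where
  "dog_setting N V Nb d T f M Astar \<longleftrightarrow>
     finite N \<and> (\<forall>i\<in>N. finite (V i) \<and> V i \<noteq> {}) \<and>
     (\<forall>i\<in>N. Nb i \<subseteq> N - {i}) \<and> T > 0 \<and> M > 0 \<and>
     (\<forall>t\<in>{1..T}. normalized (f t) \<and> nondecreasing_on (ground N V) (f t) \<and>
        submodular_on (ground N V) (f t) \<and> second_order_submodular_on (ground N V) (f t)) \<and>
     (\<forall>t\<in>{1..T}. \<forall>x\<in>ground N V. f t {x} \<le> M) \<and>
     (\<forall>i\<in>N. Astar i \<in> V i) \<and>
     (\<forall>a. (\<forall>i\<in>N. a i \<in> V i) \<longrightarrow>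
        (\<Sum>t\<in>{1..T}. f t (Act N a)) \<le> (\<Sum>t\<in>{1..T}. f t (Act N Astar)))"

definition Vd_bar :: "nat set \<Rightarrow> (nat \<Rightarrow> nat set) \<Rightarrow> (nat \<Rightarrow> nat) \<Rightarrow> nat" where
  "Vd_bar N V d = Max ((\<lambda>i. card (V i) + d i) ` N)"

end

theory Submission
  imports Defs
begin

text \<open>In every round an exchange argument compares the optimum \<open>A*\<close> with the chosen actions \<open>A\<close>:
  submodularity bounds what switching to \<open>A*\<close> gains, curvature bounds what it loses, and
  second-order submodularity charges what agent \<open>i\<close> misses by not seeing its non-neighbours to
  \<open>coin i\<close>.  This gives \<open>f A* \<le> (1 + \<kappa>) f A + \<kappa> \<Sum>i. coin i + \<Sum>i. regret i\<close>, where \<open>regret i\<close> is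
  the regret of agent \<open>i\<close> against the fixed action \<open>A* i\<close> in the bandit problem with rewards
  \<open>f t (\<cdot> | neighbours' actions)\<close>.  DOG is exponential weights with importance-weighted, delayed
  feedback for this problem.  The sampling probabilities change by a factor at most
  \<open>1 / (1 - 2 \<eta>)\<close> per step, hence at most double over a delay window, so the delay only adds
  \<open>O(\<eta> d T)\<close> to the classical \<open>ln |V| / \<eta> + \<eta> |V| T\<close> bound, and the learning rate balances the
  two.  In the decentralized case, comparing both \<open>A*\<close> and \<open>A\<close> with their sums of singleton values
  replaces the exchange argument.\<close>

section \<open>Submodular set functions\<close>

lemma nondecreasing_onD: "nondecreasing_on Om g \<Longrightarrow> A \<subseteq> B \<Longrightarrow> B \<subseteq> Om \<Longrightarrow> g A \<le> g B"
  unfolding nondecreasing_on_def by blast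

lemma submodular_onD:
  "submodular_on Om g \<Longrightarrow> A \<subseteq> B \<Longrightarrow> B \<subseteq> Om \<Longrightarrow> s \<in> Om \<Longrightarrow> marg g s B \<le> marg g s A"
  unfolding submodular_on_def by blast

lemma second_order_submodular_onD:
  "second_order_submodular_on Om g \<Longrightarrow> A \<subseteq> Om \<Longrightarrow> B \<subseteq> Om \<Longrightarrow> C \<subseteq> Om \<Longrightarrow> s \<in> Om \<Longrightarrow>
   A \<inter> B = {} \<Longrightarrow> A \<inter> C = {} \<Longrightarrow> B \<inter> C = {} \<Longrightarrow>
   marg g s (B \<union> C) - marg g s (A \<union> B \<union> C) \<le> marg g s C - marg g s (A \<union> C)"
  unfolding second_order_submodular_on_def by blast

lemma marg_empty: "normalized g \<Longrightarrow> marg g s {} = g {s}"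
  unfolding marg_def normalized_def by simp

lemma nondecreasing_on_nonneg: "normalized g \<Longrightarrow> nondecreasing_on Om g \<Longrightarrow> A \<subseteq> Om \<Longrightarrow> 0 \<le> g A"
  unfolding normalized_def nondecreasing_on_def by (metis empty_subsetI)

lemma marg_nonneg: "nondecreasing_on Om g \<Longrightarrow> A \<subseteq> Om \<Longrightarrow> s \<in> Om \<Longrightarrow> 0 \<le> marg g s A"
  unfolding marg_def by (auto intro!: nondecreasing_onD[of Om g])

lemma marg_le_singleton:
  "normalized g \<Longrightarrow> submodular_on Om g \<Longrightarrow> A \<subseteq> Om \<Longrightarrow> s \<in> Om \<Longrightarrow> marg g s A \<le> g {s}"
  using submodular_onD[of Om g "{}" A s] by (simp add: marg_empty)

lemma
  assumes "finite Om" "normalized g" "nondecreasing_on Om g" "submodular_on Om g"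
  shows curvature_nonneg: "0 \<le> curvature Om g"
    and curvature_le_one: "curvature Om g \<le> 1"
    and curvature_marg_ge: "x \<in> Om \<Longrightarrow> (1 - curvature Om g) * g {x} \<le> marg g x (Om - {x})"
proof -
  define R where "R = {(g Om - g (Om - {v})) / g {v} | v. v \<in> Om \<and> g {v} > 0}"
  have curv: "curvature Om g = (if R = {} then 0 else 1 - Min R)"
    unfolding curvature_def R_def Let_def by simp
  have "finite R"
    unfolding R_def using assms(1) by (intro finite_image_set) auto
  have marg_top: "marg g v (Om - {v}) = g Om - g (Om - {v})" if "v \<in> Om" for v
    using that unfolding marg_def by (simp add: insert_absorb)
  have R_bounds: "0 \<le> r \<and> r \<le> 1" if "r \<in> R" for r
  proof -
    obtain v where v: "r = (g Om - g (Om - {v})) / g {v}" "v \<in> Om" "g {v} > 0"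
      using \<open>r \<in> R\<close> unfolding R_def by blast
    have "0 \<le> marg g v (Om - {v})" "marg g v (Om - {v}) \<le> g {v}"
      using v(2) assms by (auto intro: marg_nonneg marg_le_singleton)
    then show ?thesis
      unfolding v(1) using v(2,3) marg_top by simp
  qed
  have "0 \<le> Min R \<and> Min R \<le> 1" if "R \<noteq> {}"
    using R_bounds Min_in[OF \<open>finite R\<close> that] by blast
  then show "0 \<le> curvature Om g" "curvature Om g \<le> 1"
    unfolding curv by auto
  assume x: "x \<in> Om"
  show "(1 - curvature Om g) * g {x} \<le> marg g x (Om - {x})"
  proof (cases "g {x} > 0")
    case True
    define r where "r = (g Om - g (Om - {x})) / g {x}"
    have "r \<in> R"
      unfolding R_def r_def using x True by blast
    then have "1 - curvature Om g \<le> r"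
      unfolding curv using \<open>finite R\<close> by auto
    then have "(1 - curvature Om g) * g {x} \<le> r * g {x}"
      using True by (intro mult_right_mono) auto
    then show ?thesis
      unfolding r_def marg_top[OF x] using True by simp
  next
    case False
    then have "g {x} = 0"
      using nondecreasing_on_nonneg[of g Om "{x}"] x assms by force
    then show ?thesis
      using marg_nonneg[of Om g "Om - {x}" x] x assms by simp
  qed
qed

lemma submodular_diff_le_sum_marg:
  assumes "submodular_on Om g" "finite S" "S \<subseteq> Om" "A \<subseteq> Om"
  shows "g (A \<union> S) - g A \<le> (\<Sum>x\<in>S. marg g x A)"
  using assms(2,3)
proof (induction S rule: finite_induct)
  case (insert x S)
  have "marg g x (A \<union> S) \<le> marg g x A"
    using insert.prems assms(4) by (intro submodular_onD[OF assms(1)]) auto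
  moreover have "g (A \<union> insert x S) = g (A \<union> S) + marg g x (A \<union> S)"
    unfolding marg_def by (simp add: Un_insert_right)
  ultimately show ?case
    using insert by simp
qed simp

lemma submodular_diff_ge_sum_marg:
  assumes "submodular_on Om g" "finite S" "S \<subseteq> Om" "B \<subseteq> Om" "S \<inter> B = {}"
  shows "(\<Sum>x\<in>S. marg g x (Om - {x})) \<le> g (B \<union> S) - g B"
  using assms(2,3,5)
proof (induction S rule: finite_induct)
  case (insert x S)
  have "marg g x (Om - {x}) \<le> marg g x (B \<union> S)"
    using insert assms(4) by (intro submodular_onD[OF assms(1)]) auto
  moreover have "g (B \<union> insert x S) = g (B \<union> S) + marg g x (B \<union> S)"
    unfolding marg_def by (simp add: Un_insert_right)
  ultimately show ?case
    using insert by simp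
qed simp

lemma curvature_diff_ge:
  assumes "finite Om" "normalized g" "nondecreasing_on Om g" "submodular_on Om g"
    and "S \<subseteq> Om" "B \<subseteq> Om" "S \<inter> B = {}"
  shows "(1 - curvature Om g) * (\<Sum>x\<in>S. g {x}) \<le> g (B \<union> S) - g B"
proof -
  have "finite S"
    using assms(1,5) by (rule finite_subset[rotated])
  have "(1 - curvature Om g) * (\<Sum>x\<in>S. g {x}) \<le> (\<Sum>x\<in>S. marg g x (Om - {x}))"
    unfolding sum_distrib_left using assms(5) by (intro sum_mono curvature_marg_ge[OF assms(1-4)]) auto
  also have "\<dots> \<le> g (B \<union> S) - g B"
    using \<open>finite S\<close> assms by (intro submodular_diff_ge_sum_marg) auto
  finally show ?thesis .
qed

section \<open>The exchange argument in one round\<close>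

lemma finite_ground: "finite N \<Longrightarrow> \<forall>i\<in>N. finite (V i) \<Longrightarrow> finite (ground N V)"
  unfolding ground_def by blast

lemma Act_subset_ground: "S \<subseteq> N \<Longrightarrow> \<forall>i\<in>S. a i \<in> V i \<Longrightarrow> Act S a \<subseteq> ground N V"
  by (auto simp: Act_def ground_def)

lemma Act_empty [simp]: "Act {} a = {}"
  by (simp add: Act_def)

lemma Act_Un: "Act (S \<union> S') a = Act S a \<union> Act S' a"
  by (auto simp: Act_def)

lemma Act_disjoint: "S \<inter> S' = {} \<Longrightarrow> Act S a \<inter> Act S' b = {}"
  by (auto simp: Act_def)

lemma Act_cong: "(\<And>i. i \<in> S \<Longrightarrow> a i = b i) \<Longrightarrow> Act S a = Act S b"
  unfolding Act_def by (rule image_cong) auto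

lemma sum_Act: "(\<Sum>x\<in>Act S a. F x) = (\<Sum>i\<in>S. F (i, a i))"
  unfolding Act_def by (rule sum.reindex_cong[of "\<lambda>i. (i, a i)"]) (auto simp: inj_on_def)

lemma sum_marg_complement_le:
  assumes "normalized g" "submodular_on (ground N V) g" "finite N" "\<forall>i\<in>N. a i \<in> V i" "S \<subseteq> N"
  shows "(\<Sum>i\<in>S. marg g (i, a i) (Act (N - {i}) a)) \<le> g (Act S a)"
  using finite_subset[OF assms(5,3)] assms(5)
proof (induction S rule: finite_induct)
  case empty
  then show ?case
    using assms(1) by (simp add: normalized_def)
next
  case (insert j S)
  have "marg g (j, a j) (Act (N - {j}) a) \<le> marg g (j, a j) (Act S a)"
    using insert assms(4) by (intro submodular_onD[OF assms(2)] Act_subset_ground)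
      (auto simp: Act_def ground_def)
  moreover have "g (Act (insert j S) a) = g (Act S a) + marg g (j, a j) (Act S a)"
    unfolding marg_def Act_def by (simp add: insert_commute)
  ultimately show ?case
    using insert by simp
qed

lemma
  assumes "normalized g" "submodular_on (ground N V) g" "\<forall>i\<in>N. Nb i \<subseteq> N - {i}"
    and "\<forall>i\<in>N. a i \<in> V i" "i \<in> N"
  shows coin_nonneg: "0 \<le> coin N Nb g i a"
    and coin_add_marg_le: "coin N Nb g i a + marg g (i, a i) (Act (N - {i}) a) \<le> g {(i, a i)}"
proof -
  have "Act (N - {i} - Nb i) a \<subseteq> Act (N - {i}) a" "Act (N - {i}) a \<subseteq> ground N V"
    using assms(4) by (auto simp: Act_def ground_def)
  moreover have "(i, a i) \<in> ground N V"
    using assms(4,5) by (simp add: ground_def)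
  ultimately show "0 \<le> coin N Nb g i a" "coin N Nb g i a + marg g (i, a i) (Act (N - {i}) a) \<le> g {(i, a i)}"
    unfolding coin_def using marg_le_singleton[OF assms(1,2)] submodular_onD[OF assms(2)] by force+
qed

text \<open>Second-order submodularity with \<open>C = {}\<close>: the information of the non-neighbours is worth
  at most the centralization of information.\<close>

lemma marg_neighbours_le:
  assumes "normalized g" "second_order_submodular_on (ground N V) g" "\<forall>i\<in>N. Nb i \<subseteq> N - {i}"
    and "\<forall>i\<in>N. a i \<in> V i" "i \<in> N"
  shows "marg g (i, a i) (Act (Nb i) a) \<le> coin N Nb g i a + marg g (i, a i) (Act (N - {i}) a)"
proof -
  define B where "B = Act (N - {i} - Nb i) a"
  have "Act (Nb i) a \<union> B = Act (N - {i}) a"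
    unfolding B_def Act_Un[symmetric] using assms(3,5) by (intro arg_cong[where f="\<lambda>S. Act S a"]) auto
  moreover have "marg g (i, a i) (Act (Nb i) a \<union> {}) - marg g (i, a i) (B \<union> Act (Nb i) a \<union> {})
      \<le> marg g (i, a i) {} - marg g (i, a i) (B \<union> {})"
    using assms(3-5) unfolding B_def
    by (intro second_order_submodular_onD[OF assms(2)] Act_disjoint Act_subset_ground)
      (auto simp: ground_def)
  ultimately show ?thesis
    unfolding coin_def B_def by (simp add: marg_empty[OF assms(1)] Un_commute)
qed

lemma
  assumes "finite N" "\<forall>i\<in>N. finite (V i)" "normalized g" "nondecreasing_on (ground N V) g"
    and "submodular_on (ground N V) g" "\<forall>i\<in>N. a i \<in> V i"
  shows submodular_le_sum_singletons: "g (Act N a) \<le> (\<Sum>i\<in>N. g {(i, a i)})"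
    and curvature_sum_singletons_le:
      "(1 - curvature (ground N V) g) * (\<Sum>i\<in>N. g {(i, a i)}) \<le> g (Act N a)"
proof -
  have "finite (ground N V)"
    using assms(1,2) by (rule finite_ground)
  moreover have "Act N a \<subseteq> ground N V"
    using assms(6) by (intro Act_subset_ground) auto
  ultimately show "g (Act N a) \<le> (\<Sum>i\<in>N. g {(i, a i)})"
    "(1 - curvature (ground N V) g) * (\<Sum>i\<in>N. g {(i, a i)}) \<le> g (Act N a)"
    using submodular_diff_le_sum_marg[OF assms(5) _ _ empty_subsetI, of "Act N a"]
      curvature_diff_ge[OF _ assms(3-5) _ empty_subsetI, of "Act N a"] assms(1,3)
    by (auto simp: sum_Act marg_empty normalized_def finite_subset)
qed

text \<open>Exchanging the actions \<open>a\<close> for \<open>as\<close> only at the agents \<open>D\<close> where they differ: the gain is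
  bounded from above by submodularity and the loss from below by curvature.\<close>

lemma exchange_bound:
  assumes "finite N" "\<forall>i\<in>N. finite (V i)" "normalized g" "nondecreasing_on (ground N V) g"
    and "submodular_on (ground N V) g" "\<forall>i\<in>N. Nb i \<subseteq> N - {i}"
    and "\<forall>i\<in>N. a i \<in> V i" "\<forall>i\<in>N. as i \<in> V i"
  defines "D \<equiv> {i\<in>N. a i \<noteq> as i}"
  shows "g (Act N as) \<le> g (Act N a)
    + (\<Sum>i\<in>D. marg g (i, as i) (Act (Nb i) a) - (1 - curvature (ground N V) g) * g {(i, a i)})"
proof -
  have "finite D"
    unfolding D_def using assms(1) by simp
  have A: "Act N a \<subseteq> ground N V" and As: "Act N as \<subseteq> ground N V"
    using assms(7,8) by (simp_all add: Act_subset_ground)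
  have DA: "Act D a \<subseteq> ground N V" and DAs: "Act D as \<subseteq> ground N V"
    using assms(7,8) by (auto simp: D_def Act_def ground_def)
  have union: "Act N a \<union> Act D as = Act N as \<union> Act D a"
    unfolding D_def Act_def by (auto simp: image_iff; metis)
  have "g (Act N a \<union> Act D as) - g (Act N a) \<le> (\<Sum>i\<in>D. marg g (i, as i) (Act N a))"
    using submodular_diff_le_sum_marg[OF assms(5) _ DAs A] \<open>finite D\<close>
    unfolding sum_Act by (simp add: Act_def)
  also have "\<dots> \<le> (\<Sum>i\<in>D. marg g (i, as i) (Act (Nb i) a))"
    using assms(6-8) A by (intro sum_mono submodular_onD[OF assms(5)])
      (auto simp: D_def Act_def ground_def)
  finally have up: "g (Act N a \<union> Act D as) - g (Act N a) \<le> (\<Sum>i\<in>D. marg g (i, as i) (Act (Nb i) a))" .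
  have "(1 - curvature (ground N V) g) * (\<Sum>i\<in>D. g {(i, a i)}) \<le> g (Act N as \<union> Act D a) - g (Act N as)"
  proof -
    have "finite (ground N V)"
      using assms(1,2) by (rule finite_ground)
    moreover have "Act D a \<inter> Act N as = {}"
      unfolding D_def Act_def by auto
    ultimately show ?thesis
      using curvature_diff_ge[OF _ assms(3-5) DA As] unfolding sum_Act by blast
  qed
  with up show ?thesis
    unfolding union by (simp add: sum_subtractf sum_distrib_left)
qed

lemma marg_neighbours_curvature_le:
  assumes "finite N" "\<forall>i\<in>N. finite (V i)" "normalized g" "nondecreasing_on (ground N V) g"
    and "submodular_on (ground N V) g" "second_order_submodular_on (ground N V) g"
    and "\<forall>i\<in>N. Nb i \<subseteq> N - {i}" "\<forall>i\<in>N. a i \<in> V i" "i \<in> N"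
    and "curvature (ground N V) g \<le> \<kappa>" "\<kappa> \<le> 1"
  shows "marg g (i, a i) (Act (Nb i) a) - (1 - curvature (ground N V) g) * g {(i, a i)}
    \<le> \<kappa> * (coin N Nb g i a + marg g (i, a i) (Act (N - {i}) a))"
proof -
  have "0 \<le> marg g (i, a i) (Act (N - {i}) a)"
    using assms(8,9) by (intro marg_nonneg[OF assms(4)] Act_subset_ground) (auto simp: ground_def)
  then have "(1 - \<kappa>) * (coin N Nb g i a + marg g (i, a i) (Act (N - {i}) a))
      \<le> (1 - curvature (ground N V) g) * g {(i, a i)}"
    using coin_nonneg[OF assms(3,5,7-9)] coin_add_marg_le[OF assms(3,5,7-9)] assms(10,11)
    by (intro mult_mono) auto
  then show ?thesis
    using marg_neighbours_le[OF assms(3,6-9)] by (simp add: algebra_simps)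
qed

lemma coin_round_bound:
  assumes "finite N" "\<forall>i\<in>N. finite (V i)" "normalized g" "nondecreasing_on (ground N V) g"
    and "submodular_on (ground N V) g" "second_order_submodular_on (ground N V) g"
    and "\<forall>i\<in>N. Nb i \<subseteq> N - {i}" "\<forall>i\<in>N. a i \<in> V i" "\<forall>i\<in>N. as i \<in> V i"
    and "curvature (ground N V) g \<le> \<kappa>" "\<kappa> \<le> 1"
  shows "g (Act N as) - (\<Sum>i\<in>N. marg g (i, as i) (Act (Nb i) a) - marg g (i, a i) (Act (Nb i) a))
     \<le> (1 + \<kappa>) * g (Act N a) + \<kappa> * (\<Sum>i\<in>N. coin N Nb g i a)"
proof -
  define D where "D = {i\<in>N. a i \<noteq> as i}"
  define m where "m i = marg g (i, a i) (Act (N - {i}) a)" for i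
  have "0 \<le> \<kappa>"
    using curvature_nonneg[OF finite_ground[OF assms(1,2)] assms(3-5)] assms(10) by linarith
  have "0 \<le> coin N Nb g i a + m i" if "i \<in> N" for i
    unfolding m_def using that assms(8) coin_nonneg[OF assms(3,5,7,8) that]
    by (intro add_nonneg_nonneg marg_nonneg[OF assms(4)] Act_subset_ground) (auto simp: ground_def)
  then have "(\<Sum>i\<in>D. marg g (i, a i) (Act (Nb i) a) - (1 - curvature (ground N V) g) * g {(i, a i)})
      \<le> (\<Sum>i\<in>N. \<kappa> * (coin N Nb g i a + m i))"
    using assms(1) \<open>0 \<le> \<kappa>\<close> marg_neighbours_curvature_le[OF assms(1-8) _ assms(10,11)]
    by (intro sum_le_included[where i=id]) (auto simp: D_def m_def)
  also have "\<dots> = \<kappa> * (\<Sum>i\<in>N. coin N Nb g i a) + \<kappa> * (\<Sum>i\<in>N. m i)"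
    by (simp add: sum_distrib_left sum.distrib distrib_left)
  also have "\<dots> \<le> \<kappa> * (\<Sum>i\<in>N. coin N Nb g i a) + \<kappa> * g (Act N a)"
    using sum_marg_complement_le[OF assms(3,5,1,8) subset_refl] \<open>0 \<le> \<kappa>\<close>
    unfolding m_def by (simp add: mult_left_mono)
  finally have "(\<Sum>i\<in>D. marg g (i, as i) (Act (Nb i) a) - (1 - curvature (ground N V) g) * g {(i, a i)})
      - (\<Sum>i\<in>D. marg g (i, as i) (Act (Nb i) a) - marg g (i, a i) (Act (Nb i) a))
      \<le> \<kappa> * (\<Sum>i\<in>N. coin N Nb g i a) + \<kappa> * g (Act N a)"
    by (simp add: sum_subtractf)
  moreover have "(\<Sum>i\<in>N. marg g (i, as i) (Act (Nb i) a) - marg g (i, a i) (Act (Nb i) a))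
      = (\<Sum>i\<in>D. marg g (i, as i) (Act (Nb i) a) - marg g (i, a i) (Act (Nb i) a))"
    using assms(1) by (intro sum.mono_neutral_right) (auto simp: D_def)
  ultimately show ?thesis
    using exchange_bound[OF assms(1-5,7-9)] unfolding D_def by (simp add: algebra_simps)
qed

lemma decentralized_round_bound:
  assumes "finite N" "\<forall>i\<in>N. finite (V i)" "normalized g" "nondecreasing_on (ground N V) g"
    and "submodular_on (ground N V) g" "\<forall>i\<in>N. a i \<in> V i" "\<forall>i\<in>N. as i \<in> V i"
    and "curvature (ground N V) g \<le> \<kappa>" "\<kappa> \<le> 1"
  shows "(1 - \<kappa>) * (g (Act N as) - (\<Sum>i\<in>N. g {(i, as i)} - g {(i, a i)})) \<le> g (Act N a)"
proof -
  have "0 \<le> (\<Sum>i\<in>N. g {(i, a i)})"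
    using assms(3,4,6) by (intro sum_nonneg nondecreasing_on_nonneg) (auto simp: ground_def)
  have "g (Act N as) - (\<Sum>i\<in>N. g {(i, as i)} - g {(i, a i)}) \<le> (\<Sum>i\<in>N. g {(i, a i)})"
    using submodular_le_sum_singletons[OF assms(1-5,7)] by (simp add: sum_subtractf)
  then have "(1 - \<kappa>) * (g (Act N as) - (\<Sum>i\<in>N. g {(i, as i)} - g {(i, a i)}))
      \<le> (1 - \<kappa>) * (\<Sum>i\<in>N. g {(i, a i)})"
    using assms(9) by (intro mult_left_mono) auto
  also have "\<dots> \<le> (1 - curvature (ground N V) g) * (\<Sum>i\<in>N. g {(i, a i)})"
    using assms(8) \<open>0 \<le> (\<Sum>i\<in>N. g {(i, a i)})\<close> by (intro mult_right_mono) auto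
  also have "\<dots> \<le> g (Act N a)"
    by (rule curvature_sum_singletons_le[OF assms(1-6)])
  finally show ?thesis .
qed

section \<open>Exponential weights of one agent\<close>

lemma exp_minus_le_quadratic:
  fixes v :: real
  assumes "0 \<le> v"
  shows "exp (- v) \<le> 1 - v + v\<^sup>2"
proof -
  have "exp (- v) = 1 / exp v"
    by (simp add: exp_minus field_simps)
  also have "\<dots> \<le> 1 / (1 + v)"
    using assms by (intro divide_left_mono) auto
  also have "\<dots> \<le> 1 - v + v\<^sup>2"
  proof -
    have "1 \<le> (1 - v + v\<^sup>2) * (1 + v)"
      using assms by (simp add: algebra_simps power2_eq_square power3_eq_cube)
    then show ?thesis
      using assms by (simp add: divide_le_eq)
  qed
  finally show ?thesis .
qed

lemma power_inverse_one_minus_le_2: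
  fixes e :: real
  assumes "0 \<le> e" "e * (real n + 1) \<le> 1/4"
  shows "(1 / (1 - 2 * e)) ^ n \<le> 2"
proof -
  have "e \<le> e * (real n + 1)"
    using assms(1) by (simp add: algebra_simps)
  then have "2 * e \<le> 1"
    using assms(2) by linarith
  have "1/2 \<le> 1 + real n * (- 2 * e)"
    using assms by (simp add: algebra_simps)
  also have "\<dots> \<le> (1 - 2 * e) ^ n"
    using Bernoulli_inequality[of "- 2 * e" n] \<open>2 * e \<le> 1\<close> by (simp add: algebra_simps)
  finally show ?thesis
    by (simp add: power_one_over divide_le_eq)
qed

lemma geometric_growth_bound:
  fixes p :: "nat \<Rightarrow> real"
  assumes "0 \<le> q" "\<And>j. s \<le> j \<Longrightarrow> j < s + k \<Longrightarrow> p (Suc j) \<le> q * p j"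
  shows "p (s + k) \<le> q ^ k * p s"
  using assms(2)
proof (induction k)
  case (Suc k)
  have "p (s + Suc k) \<le> q * p (s + k)"
    using Suc.prems by simp
  also have "\<dots> \<le> q * (q ^ k * p s)"
    using Suc assms(1) by (intro mult_left_mono) auto
  finally show ?case
    by simp
qed simp

declare dog_w.simps(2) [simp del]

locale dog_agent =
  fixes V :: "nat \<Rightarrow> nat set" and Nb :: "nat \<Rightarrow> nat set" and d :: "nat \<Rightarrow> nat" and T :: nat
    and f :: "nat \<Rightarrow> (nat \<times> nat) set \<Rightarrow> real" and M :: real and i :: nat
  assumes finite_actions: "finite (V i)" and actions_nonempty: "V i \<noteq> {}"
begin

abbreviation w :: "(nat \<Rightarrow> nat \<Rightarrow> nat) \<Rightarrow> nat \<Rightarrow> nat \<Rightarrow> real" where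
  "w \<equiv> dog_w V Nb d T f M i"

abbreviation \<eta> :: real where
  "\<eta> \<equiv> dog_eta V d T i"

definition weight_sum :: "(nat \<Rightarrow> nat \<Rightarrow> nat) \<Rightarrow> nat \<Rightarrow> real" where
  "weight_sum H t = (\<Sum>c\<in>V i. w H t c)"

definition prob :: "(nat \<Rightarrow> nat \<Rightarrow> nat) \<Rightarrow> nat \<Rightarrow> nat \<Rightarrow> real" where
  "prob H t a = w H t a / weight_sum H t"

definition loss :: "(nat \<Rightarrow> nat \<Rightarrow> nat) \<Rightarrow> nat \<Rightarrow> nat \<Rightarrow> real" where
  "loss H s b = 1 - marg (f s) (i, b) (Act (Nb i) (H s)) / M"

text \<open>The paper's importance-weighted reward estimate is \<open>1 - loss_est H s a\<close>.\<close>

definition loss_est :: "(nat \<Rightarrow> nat \<Rightarrow> nat) \<Rightarrow> nat \<Rightarrow> nat \<Rightarrow> real" where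
  "loss_est H s a = (if H s i = a then loss H s a / prob H s a else 0)"

definition regular_history :: "(nat \<Rightarrow> nat \<Rightarrow> nat) \<Rightarrow> bool" where
  "regular_history H \<longleftrightarrow> (\<forall>s\<in>{1..T}. H s i \<in> V i \<and> (\<forall>b\<in>V i. 0 \<le> loss H s b \<and> loss H s b \<le> 1))"

lemma weight_pos: "0 < w H t a"
  by (induction t) (simp_all add: dog_w.simps(2))

lemma weight_sum_pos: "0 < weight_sum H t"
  unfolding weight_sum_def using weight_pos finite_actions actions_nonempty by (intro sum_pos) auto

lemma prob_pos: "0 < prob H t a"
  unfolding prob_def using weight_pos weight_sum_pos by simp

lemma prob_nonzero [simp]: "prob H t a \<noteq> 0"
  using prob_pos[of H t a] by linarith

lemma sum_prob: "(\<Sum>a\<in>V i. prob H t a) = 1"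
  unfolding prob_def sum_divide_distrib[symmetric] using weight_sum_pos[of H t]
  by (simp add: weight_sum_def)

lemma pmf_dog_p: "pmf (dog_p V Nb d T f M i H t) b = (if b \<in> V i then prob H t b else 0)"
proof -
  define p where "p b = (if b \<in> V i then prob H t b else 0)" for b
  have "(\<integral>\<^sup>+x. ennreal (p x) \<partial>count_space UNIV) = (\<integral>\<^sup>+x. ennreal (p x) \<partial>count_space (V i))"
    by (subst nn_integral_count_space_indicator) (auto simp: p_def intro!: nn_integral_cong split: split_indicator)
  also have "\<dots> = ennreal (\<Sum>x\<in>V i. p x)"
    using finite_actions prob_pos by (simp add: nn_integral_count_space_finite p_def less_imp_le)
  also have "(\<Sum>x\<in>V i. p x) = 1"
    using sum_prob by (simp add: p_def)
  finally have "pmf (embed_pmf p) b = p b"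
    using prob_pos by (intro pmf_embed_pmf) (auto simp: p_def less_imp_le)
  then show ?thesis
    unfolding dog_p_def p_def prob_def weight_sum_def .
qed

lemma set_pmf_dog_p: "set_pmf (dog_p V Nb d T f M i H t) = V i"
  unfolding set_pmf_eq pmf_dog_p using prob_pos by (auto simp: less_imp_neq[symmetric])

lemma weight_Suc:
  "w H (Suc t) a = (if d i + 1 \<le> t then w H t a * exp (\<eta> * (1 - loss_est H (t - d i) a)) else w H t a)"
  unfolding loss_est_def prob_def weight_sum_def loss_def by (subst dog_w.simps(2)) auto

lemma weight_initial: "t \<le> d i + 1 \<Longrightarrow> w H t a = 1"
  by (induction t) (simp_all add: weight_Suc)

lemma prob_Suc_inactive: "\<not> d i + 1 \<le> t \<Longrightarrow> prob H (Suc t) a = prob H t a"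
  unfolding prob_def weight_sum_def by (simp add: weight_Suc)

lemma ln_weight: "ln (w H (n + d i + 1) a) = (\<Sum>s\<in>{1..n}. \<eta> * (1 - loss_est H s a))"
proof (induction n)
  case 0
  then show ?case
    by (simp add: weight_initial)
next
  case (Suc n)
  have "w H (Suc n + d i + 1) a = w H (n + d i + 1) a * exp (\<eta> * (1 - loss_est H (Suc n) a))"
    by (simp add: weight_Suc)
  then show ?case
    using Suc weight_pos[of H "n + d i + 1" a] by (simp add: ln_mult)
qed

lemma weight_history_cong: "(\<And>r. r + d i < t \<Longrightarrow> H r = H' r) \<Longrightarrow> w H t a = w H' t a"
proof (induction t arbitrary: a rule: less_induct)
  case (less t)
  show ?case
  proof (cases t)
    case (Suc t')
    have same: "w H r c = w H' r c" if "r < t" "r \<le> t'" for r c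
      using less that by auto
    show ?thesis
    proof (cases "d i + 1 \<le> t'")
      case True
      have "loss_est H (t' - d i) a = loss_est H' (t' - d i) a"
        using same less.prems[of "t' - d i"] True Suc
        by (simp add: loss_est_def prob_def weight_sum_def loss_def)
      then show ?thesis
        using same[of t'] Suc by (simp add: weight_Suc)
    qed (use same[of t'] Suc in \<open>simp add: weight_Suc\<close>)
  qed simp
qed

lemma prob_history_cong: "(\<And>r. r + d i < t \<Longrightarrow> H r = H' r) \<Longrightarrow> prob H t a = prob H' t a"
proof -
  assume "\<And>r. r + d i < t \<Longrightarrow> H r = H' r"
  then have "w H t = w H' t"
    using weight_history_cong by blast
  then show ?thesis
    unfolding prob_def weight_sum_def by simp
qed

lemma prob_Suc_active:
  fixes H t
  defines "b \<equiv> H (t - d i) i" and "v \<equiv> \<eta> * loss_est H (t - d i) (H (t - d i) i)"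
  assumes "d i + 1 \<le> t" "b \<in> V i"
  shows "weight_sum H (Suc t) = exp \<eta> * weight_sum H t * (1 - prob H t b * (1 - exp (- v)))"
    and "prob H (Suc t) a = prob H t a * (if a = b then exp (- v) else 1) / (1 - prob H t b * (1 - exp (- v)))"
proof -
  have wS: "w H (Suc t) c = exp \<eta> * w H t c * (if c = b then exp (- v) else 1)" for c
    using assms(3) by (auto simp: weight_Suc v_def b_def loss_est_def algebra_simps simp flip: exp_add)
  have "weight_sum H (Suc t) = exp \<eta> * ((\<Sum>c\<in>V i. w H t c) - w H t b * (1 - exp (- v)))"
  proof -
    have "(\<Sum>c\<in>V i. w H t c * (if c = b then exp (- v) else 1))
        = (\<Sum>c\<in>V i. w H t c - (if c = b then w H t c * (1 - exp (- v)) else 0))"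
      by (intro sum.cong) (auto simp: algebra_simps)
    then show ?thesis
      unfolding weight_sum_def wS using finite_actions assms(4)
      by (simp add: sum_distrib_left[symmetric] mult.assoc sum_subtractf)
  qed
  moreover have "weight_sum H t * (1 - prob H t b * (1 - exp (- v))) = weight_sum H t - w H t b * (1 - exp (- v))"
    using weight_sum_pos[of H t] by (simp add: prob_def right_diff_distrib)
  ultimately show W: "weight_sum H (Suc t) = exp \<eta> * weight_sum H t * (1 - prob H t b * (1 - exp (- v)))"
    by (simp add: weight_sum_def)
  show "prob H (Suc t) a = prob H t a * (if a = b then exp (- v) else 1) / (1 - prob H t b * (1 - exp (- v)))"
    unfolding prob_def[of H "Suc t"] W wS by (simp add: prob_def)
qed

end

context dog_agent
begin

context
  fixes H :: "nat \<Rightarrow> nat \<Rightarrow> nat"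
  assumes regular: "regular_history H" and eta_pos: "0 < \<eta>" and eta_small: "\<eta> * (real (d i) + 1) \<le> 1/4"
begin

lemma two_eta_le: "2 * \<eta> \<le> 1/2"
proof -
  have "\<eta> \<le> \<eta> * (real (d i) + 1)"
    using eta_pos by (simp add: algebra_simps)
  then show ?thesis
    using eta_small by linarith
qed

lemma played_action_bounds:
  fixes t
  defines "s \<equiv> t - d i"
  defines "b \<equiv> H s i"
  assumes "d i + 1 \<le> t" "s \<le> T" "prob H t b \<le> 2 * prob H s b"
  shows "b \<in> V i" "0 \<le> loss_est H s b" "prob H t b * loss_est H s b \<le> 2"
proof -
  have s: "s \<in> {1..T}"
    using assms(3,4) by (simp add: s_def)
  then show b: "b \<in> V i"
    using regular by (simp add: regular_history_def b_def)
  have l: "0 \<le> loss H s b" "loss H s b \<le> 1"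
    using regular s b by (auto simp: regular_history_def)
  have L: "loss_est H s b = loss H s b / prob H s b"
    by (simp add: loss_est_def b_def)
  show "0 \<le> loss_est H s b"
    unfolding L using l prob_pos[of H s b] by simp
  have "prob H t b * loss_est H s b = loss H s b * (prob H t b / prob H s b)"
    by (simp add: L)
  also have "\<dots> \<le> 1 * 2"
    using l assms(5) prob_pos[of H s b] prob_pos[of H t b]
    by (intro mult_mono) (auto simp: divide_le_eq)
  finally show "prob H t b * loss_est H s b \<le> 2"
    by simp
qed

text \<open>The update at time \<open>t\<close> feeds back round \<open>s = t - d i\<close>: it multiplies the weight of the
  action \<open>b\<close> played at \<open>s\<close> by \<open>exp (- (\<eta> * L))\<close> (besides the common factor \<open>exp \<eta>\<close>), so the
  total weight shrinks by the factor \<open>1 - z\<close>.\<close>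

lemma active_step_bounds:
  fixes t
  defines "s \<equiv> t - d i"
  defines "b \<equiv> H s i"
  defines "x \<equiv> prob H t b" and "L \<equiv> loss_est H s b"
  defines "z \<equiv> x * (1 - exp (- (\<eta> * L)))"
  assumes "d i + 1 \<le> t" "s \<le> T" "prob H t b \<le> 2 * prob H s b"
  shows "b \<in> V i" "0 \<le> L" "x * L \<le> 2" "0 \<le> z" "z \<le> 2 * \<eta>"
    "x * (\<eta> * L) - 2 * \<eta>\<^sup>2 * L \<le> z"
proof -
  show b: "b \<in> V i" and L0: "0 \<le> L" and xL: "x * L \<le> 2"
    using played_action_bounds[of t] assms(6-8) unfolding x_def L_def s_def b_def by simp_all
  have x0: "0 < x"
    using prob_pos by (simp add: x_def)
  have "1 - exp (- (\<eta> * L)) \<le> \<eta> * L"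
    using exp_ge_add_one_self[of "- (\<eta> * L)"] by simp
  then have "z \<le> x * (\<eta> * L)"
    unfolding z_def using x0 by (intro mult_left_mono) auto
  also have "\<dots> = \<eta> * (x * L)"
    by simp
  also have "\<dots> \<le> \<eta> * 2"
    using xL eta_pos by (intro mult_left_mono) auto
  finally show "z \<le> 2 * \<eta>"
    by simp
  show "0 \<le> z"
    unfolding z_def using x0 L0 eta_pos by simp
  have "\<eta> * L - (\<eta> * L)\<^sup>2 \<le> 1 - exp (- (\<eta> * L))"
    using exp_minus_le_quadratic[of "\<eta> * L"] L0 eta_pos by simp
  then have "x * (\<eta> * L - (\<eta> * L)\<^sup>2) \<le> z"
    unfolding z_def using x0 by (intro mult_left_mono) auto
  moreover have "x * (\<eta> * L)\<^sup>2 \<le> 2 * \<eta>\<^sup>2 * L"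
  proof -
    have "x * (\<eta> * L)\<^sup>2 = \<eta>\<^sup>2 * L * (x * L)"
      by (simp add: power2_eq_square)
    also have "\<dots> \<le> \<eta>\<^sup>2 * L * 2"
      using xL L0 by (intro mult_left_mono) auto
    finally show ?thesis
      by simp
  qed
  ultimately show "x * (\<eta> * L) - 2 * \<eta>\<^sup>2 * L \<le> z"
    by (simp add: right_diff_distrib)
qed

lemma
  fixes t
  defines "s \<equiv> t - d i"
  defines "b \<equiv> H s i"
  assumes "d i + 1 \<le> t" "s \<le> T" "prob H t b \<le> 2 * prob H s b"
  shows prob_Suc_le_active: "prob H (Suc t) a \<le> prob H t a / (1 - 2 * \<eta>)"
    and prob_Suc_ge_active: "prob H t a - (if a = b then 2 * \<eta> else 0) \<le> prob H (Suc t) a"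
proof -
  define x L where "x = prob H t b" and "L = loss_est H s b"
  define z where "z = x * (1 - exp (- (\<eta> * L)))"
  have bounds: "b \<in> V i" "0 \<le> L" "x * L \<le> 2" "0 \<le> z" "z \<le> 2 * \<eta>"
    using active_step_bounds[of t] assms(3-5) unfolding x_def L_def z_def s_def b_def by simp_all
  have z1: "0 < 1 - z" "1 - 2 * \<eta> \<le> 1 - z"
    using bounds two_eta_le by auto
  have p: "prob H (Suc t) a = prob H t a * (if a = b then exp (- (\<eta> * L)) else 1) / (1 - z)"
    using prob_Suc_active(2)[OF assms(3)] bounds(1) by (simp add: z_def x_def L_def s_def b_def)
  have "prob H (Suc t) a \<le> prob H t a / (1 - z)"
    unfolding p using prob_pos[of H t a] bounds(2) eta_pos z1
    by (intro divide_right_mono) (auto simp: mult_le_cancel_left1)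
  also have "\<dots> \<le> prob H t a / (1 - 2 * \<eta>)"
    using z1 two_eta_le prob_pos[of H t a] by (intro divide_left_mono) auto
  finally show "prob H (Suc t) a \<le> prob H t a / (1 - 2 * \<eta>)" .
  have "prob H t a * (if a = b then exp (- (\<eta> * L)) else 1) \<le> prob H (Suc t) a"
    unfolding p using z1 bounds(4) prob_pos[of H t a] by (simp add: le_divide_eq mult_le_cancel_left1)
  moreover have "x - 2 * \<eta> \<le> x * exp (- (\<eta> * L))"
  proof -
    have "x - 2 * \<eta> \<le> x * (1 - \<eta> * L)"
      using bounds(3) eta_pos by (simp add: algebra_simps)
    also have "\<dots> \<le> x * exp (- (\<eta> * L))"
      using prob_pos[of H t b] exp_ge_add_one_self[of "- (\<eta> * L)"] unfolding x_def
      by (intro mult_left_mono) auto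
    finally show ?thesis .
  qed
  ultimately show "prob H t a - (if a = b then 2 * \<eta> else 0) \<le> prob H (Suc t) a"
    unfolding x_def using eta_pos by (auto split: if_splits)
qed

lemma ln_weight_sum_Suc_le:
  fixes t
  defines "s \<equiv> t - d i"
  defines "b \<equiv> H s i"
  assumes "d i + 1 \<le> t" "s \<le> T" "prob H t b \<le> 2 * prob H s b"
  shows "ln (weight_sum H (Suc t)) - ln (weight_sum H t)
    \<le> \<eta> - \<eta> * prob H t b * loss_est H s b + 2 * \<eta>\<^sup>2 * loss_est H s b"
proof -
  define z where "z = prob H t b * (1 - exp (- (\<eta> * loss_est H s b)))"
  have bounds: "b \<in> V i" "z \<le> 2 * \<eta>"
    "prob H t b * (\<eta> * loss_est H s b) - 2 * \<eta>\<^sup>2 * loss_est H s b \<le> z"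
    using active_step_bounds[of t] assms(3-5) unfolding z_def s_def b_def by simp_all
  have "0 < 1 - z"
    using bounds(2) two_eta_le by simp
  then have "ln (weight_sum H (Suc t)) = \<eta> + ln (weight_sum H t) + ln (1 - z)"
    using prob_Suc_active(1)[OF assms(3)] bounds(1) weight_sum_pos[of H t]
    by (simp add: z_def s_def b_def ln_mult)
  moreover have "ln (1 - z) \<le> - z"
    using ln_le_minus_one[of "1 - z"] \<open>0 < 1 - z\<close> by simp
  ultimately show ?thesis
    using bounds(3) by (simp add: algebra_simps)
qed

lemma prob_window_le_2:
  assumes "\<And>j c. s \<le> j \<Longrightarrow> j < s + d i \<Longrightarrow> prob H (Suc j) c \<le> prob H j c / (1 - 2 * \<eta>)"
  shows "prob H (s + d i) b \<le> 2 * prob H s b"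
proof -
  have "0 < 1 - 2 * \<eta>"
    using two_eta_le by simp
  then have "prob H (s + d i) b \<le> (1 / (1 - 2 * \<eta>)) ^ d i * prob H s b"
    using assms by (intro geometric_growth_bound[where p="\<lambda>j. prob H j b"]) auto
  also have "\<dots> \<le> 2 * prob H s b"
    using power_inverse_one_minus_le_2[of \<eta> "d i"] eta_pos eta_small prob_pos[of H s b]
    by (intro mult_right_mono) auto
  finally show ?thesis .
qed

text \<open>Strong induction: a step is stable once the steps of the delay window before it are.\<close>

lemma prob_Suc_le: "t \<le> T + d i \<Longrightarrow> prob H (Suc t) a \<le> prob H t a / (1 - 2 * \<eta>)"
proof (induction t arbitrary: a rule: less_induct)
  case (less t)
  show ?case
  proof (cases "d i + 1 \<le> t")
    case True
    have "prob H (t - d i + d i) (H (t - d i) i) \<le> 2 * prob H (t - d i) (H (t - d i) i)"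
      using less True by (intro prob_window_le_2) auto
    then show ?thesis
      using less.prems True by (intro prob_Suc_le_active) auto
  next
    case False
    then show ?thesis
      using two_eta_le eta_pos prob_pos[of H t a] by (simp add: prob_Suc_inactive le_divide_eq)
  qed
qed

lemma prob_window_le: "s \<le> T \<Longrightarrow> prob H (s + d i) b \<le> 2 * prob H s b"
  by (intro prob_window_le_2 prob_Suc_le) auto

lemma prob_Suc_ge:
  assumes "t < T + d i"
  shows "prob H t a - (if d i + 1 \<le> t \<and> a = H (t - d i) i then 2 * \<eta> else 0) \<le> prob H (Suc t) a"
proof (cases "d i + 1 \<le> t")
  case True
  have "prob H t (H (t - d i) i) \<le> 2 * prob H (t - d i) (H (t - d i) i)"
    using prob_window_le[of "t - d i" "H (t - d i) i"] True assms by simp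
  then show ?thesis
    using prob_Suc_ge_active[of t a] True assms by simp
qed (simp add: prob_Suc_inactive)

lemma expected_loss_drift:
  assumes "s \<le> T" "\<And>b. b \<in> V i \<Longrightarrow> 0 \<le> l b \<and> l b \<le> 1"
  shows "(\<Sum>b\<in>V i. prob H s b * l b) - 2 * \<eta> * d i \<le> (\<Sum>b\<in>V i. prob H (s + d i) b * l b)"
proof -
  have "(\<Sum>b\<in>V i. prob H s b * l b) - 2 * \<eta> * k \<le> (\<Sum>b\<in>V i. prob H (s + k) b * l b)"
    if "k \<le> d i" for k
    using that
  proof (induction k)
    case (Suc k)
    define t where "t = s + k"
    define c where "c = H (t - d i) i"
    have low: "prob H t b - prob H (Suc t) b \<le> (if b = c then 2 * \<eta> else 0)" for b
      using prob_Suc_ge[of t b] assms(1) Suc.prems eta_pos unfolding t_def c_def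
      by (auto split: if_splits)
    have "(\<Sum>b\<in>V i. prob H t b * l b) - (\<Sum>b\<in>V i. prob H (Suc t) b * l b)
        = (\<Sum>b\<in>V i. (prob H t b - prob H (Suc t) b) * l b)"
      by (simp add: sum_subtractf left_diff_distrib)
    also have "\<dots> \<le> (\<Sum>b\<in>V i. (if b = c then 2 * \<eta> else 0) * l b)"
      using low assms(2) by (intro sum_mono mult_right_mono) auto
    also have "\<dots> \<le> 2 * \<eta>"
      using finite_actions assms(2) eta_pos
      by (auto simp: if_distrib[of "\<lambda>x. x * _"] sum.delta cong: if_cong intro: mult_left_le)
    finally show ?case
      using Suc unfolding t_def by (simp add: algebra_simps)
  qed simp
  then show ?thesis
    by simp
qed

lemma potential_bound:
  assumes "a \<in> V i"
  shows "(\<Sum>s\<in>{1..T}. prob H (s + d i) (H s i) * loss_est H s (H s i) - loss_est H s a)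
     \<le> ln (card (V i)) / \<eta> + 2 * \<eta> * (\<Sum>s\<in>{1..T}. loss_est H s (H s i))"
proof -
  define g where "g s = ln (weight_sum H (s + d i))" for s
  have "g 1 = ln (card (V i))"
    by (simp add: g_def weight_sum_def weight_initial)
  have step: "g (Suc s) - g s
      \<le> \<eta> - \<eta> * prob H (s + d i) (H s i) * loss_est H s (H s i) + 2 * \<eta>\<^sup>2 * loss_est H s (H s i)"
    if "s \<in> {1..T}" for s
    using ln_weight_sum_Suc_le[of "s + d i"] prob_window_le[of s "H s i"] that
    by (simp add: g_def)
  have "w H (T + d i + 1) a \<le> weight_sum H (T + d i + 1)"
    unfolding weight_sum_def using finite_actions assms weight_pos
    by (intro member_le_sum) (auto simp: less_imp_le)
  then have "ln (w H (T + d i + 1) a) \<le> g (Suc T)"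
    using weight_pos[of H "T + d i + 1" a] by (simp add: g_def)
  moreover have "(\<Sum>s\<in>{1..T}. g (Suc s) - g s) = g (Suc T) - g 1"
    by (rule sum_Suc_diff) simp
  ultimately have "(\<Sum>s\<in>{1..T}. \<eta> * (1 - loss_est H s a)) \<le> g 1 + (\<Sum>s\<in>{1..T}. g (Suc s) - g s)"
    using ln_weight[of H T a] by simp
  also have "\<dots> \<le> g 1 + (\<Sum>s\<in>{1..T}.
      \<eta> - \<eta> * prob H (s + d i) (H s i) * loss_est H s (H s i) + 2 * \<eta>\<^sup>2 * loss_est H s (H s i))"
    using step by (intro add_left_mono sum_mono) auto
  finally have "\<eta> * (\<Sum>s\<in>{1..T}. prob H (s + d i) (H s i) * loss_est H s (H s i) - loss_est H s a)
      \<le> g 1 + \<eta> * (2 * \<eta> * (\<Sum>s\<in>{1..T}. loss_est H s (H s i)))"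
    by (simp add: sum_subtractf sum.distrib sum_distrib_left algebra_simps power2_eq_square)
  then show ?thesis
    using eta_pos \<open>g 1 = ln (card (V i))\<close> by (simp add: field_simps)
qed

end

end

section \<open>Expectations over the trajectories of DOG\<close>

lemma expectation_bind_pmf_finite:
  fixes F :: "'b \<Rightarrow> real"
  assumes "finite (set_pmf p)" "\<And>x. x \<in> set_pmf p \<Longrightarrow> finite (set_pmf (q x))"
  shows "measure_pmf.expectation (bind_pmf p q) F
    = measure_pmf.expectation p (\<lambda>x. measure_pmf.expectation (q x) F)"
proof -
  have "measure_pmf.expectation (bind_pmf p q) F = (\<Sum>x\<in>set_pmf p. pmf p x *\<^sub>R measure_pmf.expectation (q x) F)"
    using assms by (intro pmf_expectation_bind) auto
  also have "\<dots> = measure_pmf.expectation p (\<lambda>x. measure_pmf.expectation (q x) F)"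
    using assms by (intro integral_measure_pmf[symmetric]) auto
  finally show ?thesis .
qed

lemma expectation_Pi_pmf_resample:
  fixes G :: "('a \<Rightarrow> 'b) \<Rightarrow> real"
  assumes "finite N" "i \<in> N" "\<And>j. j \<in> N \<Longrightarrow> finite (set_pmf (P j))" "set_pmf (P i) \<subseteq> S" "finite S"
  shows "measure_pmf.expectation (Pi_pmf N dflt P) G
    = measure_pmf.expectation (Pi_pmf N dflt P) (\<lambda>A. \<Sum>b\<in>S. pmf (P i) b * G (A(i := b)))"
proof -
  define Q where "Q = Pi_pmf (N - {i}) dflt P"
  have split: "Pi_pmf N dflt P = map_pmf (\<lambda>(b, A). A(i := b)) (pair_pmf (P i) Q)"
    unfolding Q_def using assms(1,2) Pi_pmf_insert[of "N - {i}" i dflt P] by (simp add: insert_absorb)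
  have fin: "finite (set_pmf Q)" "finite (set_pmf (P i))"
    unfolding Q_def using assms by (auto intro!: finite_subset[OF set_Pi_pmf_subset'] finite_PiE_dflt)
  have expect_pair: "measure_pmf.expectation (Pi_pmf N dflt P) F
      = measure_pmf.expectation (P i) (\<lambda>b. measure_pmf.expectation Q (\<lambda>A. F (A(i := b))))"
    for F :: "('a \<Rightarrow> 'b) \<Rightarrow> real"
    unfolding split pair_pmf_def using fin by (simp add: expectation_bind_pmf_finite)
  have "measure_pmf.expectation (Pi_pmf N dflt P) G
      = (\<Sum>b\<in>S. measure_pmf.expectation Q (\<lambda>A. G (A(i := b))) * pmf (P i) b)"
    unfolding expect_pair using assms(4,5) by (intro integral_measure_pmf_real) auto
  also have "\<dots> = measure_pmf.expectation Q (\<lambda>A. \<Sum>b\<in>S. pmf (P i) b * G (A(i := b)))"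
    using fin by (simp add: integrable_measure_pmf_finite mult.commute)
  also have "\<dots> = measure_pmf.expectation (Pi_pmf N dflt P) (\<lambda>A. \<Sum>b\<in>S. pmf (P i) b * G (A(i := b)))"
    unfolding expect_pair by simp
  finally show ?thesis .
qed

locale dog_system =
  fixes N :: "nat set" and V :: "nat \<Rightarrow> nat set" and Nb :: "nat \<Rightarrow> nat set" and d :: "nat \<Rightarrow> nat"
    and T :: nat and f :: "nat \<Rightarrow> (nat \<times> nat) set \<Rightarrow> real" and M :: real
  assumes finite_agents: "finite N"
    and finite_V: "j \<in> N \<Longrightarrow> finite (V j)" and V_nonempty: "j \<in> N \<Longrightarrow> V j \<noteq> {}"
begin

abbreviation traj :: "nat \<Rightarrow> (nat \<Rightarrow> nat \<Rightarrow> nat) pmf" where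
  "traj \<equiv> dog_traj N V Nb d T f M"

abbreviation round :: "(nat \<Rightarrow> nat \<Rightarrow> nat) \<Rightarrow> nat \<Rightarrow> (nat \<Rightarrow> nat) pmf" where
  "round H t \<equiv> Pi_pmf N 0 (\<lambda>j. dog_p V Nb d T f M j H t)"

lemma dog_agentI: "j \<in> N \<Longrightarrow> dog_agent V j"
  using finite_V V_nonempty by unfold_locales

lemma
  shows finite_set_pmf_round: "finite (set_pmf (round H t))"
    and set_pmf_round_actions: "A \<in> set_pmf (round H t) \<Longrightarrow> j \<in> N \<Longrightarrow> A j \<in> V j"
proof -
  have V: "set_pmf (dog_p V Nb d T f M j H t) = V j" if "j \<in> N" for j
    using dog_agent.set_pmf_dog_p[OF dog_agentI[OF that]] .
  have sub: "set_pmf (round H t) \<subseteq> PiE_dflt N 0 V"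
    using set_Pi_pmf_subset'[OF finite_agents] V unfolding PiE_dflt_def by fastforce
  show "finite (set_pmf (round H t))"
    by (rule finite_subset[OF sub]) (simp add: finite_PiE_dflt finite_agents finite_V)
  show "A \<in> set_pmf (round H t) \<Longrightarrow> j \<in> N \<Longrightarrow> A j \<in> V j"
    using sub by (auto simp: PiE_dflt_def)
qed

lemma
  shows finite_set_pmf_traj [simp]: "finite (set_pmf (traj n))"
    and traj_actions: "H \<in> set_pmf (traj n) \<Longrightarrow> t \<in> {1..n} \<Longrightarrow> j \<in> N \<Longrightarrow> H t j \<in> V j"
proof (induction n arbitrary: H)
  case (Suc n)
  { case 1
    show ?case
      using Suc.IH(1) finite_set_pmf_round by simp
  next
    case 2
    then obtain H' A where "H' \<in> set_pmf (traj n)" "A \<in> set_pmf (round H' (Suc n))" "H = H'(Suc n := A)"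
      by auto
    then show ?case
      using 2 Suc.IH(2) set_pmf_round_actions by (cases "t = Suc n") auto }
qed auto

lemma integrable_traj [simp]: "integrable (measure_pmf (traj n)) (F :: _ \<Rightarrow> real)"
  by (simp add: integrable_measure_pmf_finite)

abbreviation expect :: "((nat \<Rightarrow> nat \<Rightarrow> nat) \<Rightarrow> real) \<Rightarrow> real" where
  "expect F \<equiv> measure_pmf.expectation (traj T) F"

lemma expect_mono: "(\<And>H. H \<in> set_pmf (traj T) \<Longrightarrow> F H \<le> G H) \<Longrightarrow> expect F \<le> expect G"
  by (intro integral_mono_AE integrable_traj AE_pmfI)

lemma expect_cong: "(\<And>H. H \<in> set_pmf (traj T) \<Longrightarrow> F H = G H) \<Longrightarrow> expect F = expect G"
  by (intro integral_cong_AE) (auto intro: AE_pmfI)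

lemma expectation_traj_Suc:
  fixes F :: "(nat \<Rightarrow> nat \<Rightarrow> nat) \<Rightarrow> real"
  shows "measure_pmf.expectation (traj (Suc n)) F
    = measure_pmf.expectation (traj n) (\<lambda>H. measure_pmf.expectation (round H (Suc n)) (\<lambda>A. F (H(Suc n := A))))"
  using finite_set_pmf_round by (simp add: expectation_bind_pmf_finite)

lemma expectation_traj_history:
  fixes F :: "(nat \<Rightarrow> nat \<Rightarrow> nat) \<Rightarrow> real"
  assumes "\<And>H H'. (\<And>t. t \<le> n \<Longrightarrow> H t = H' t) \<Longrightarrow> F H = F H'" "n \<le> m"
  shows "measure_pmf.expectation (traj m) F = measure_pmf.expectation (traj n) F"
  using assms(2)
proof (induction m)
  case (Suc m)
  show ?case
  proof (cases "n = Suc m")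
    case False
    then have "F (H(Suc m := A)) = F H" for H A
      using Suc.prems by (intro assms(1)) auto
    then show ?thesis
      using Suc False unfolding expectation_traj_Suc by simp
  qed simp
qed simp

lemma expectation_round_resample:
  fixes F :: "(nat \<Rightarrow> nat) \<Rightarrow> real"
  assumes "i \<in> N"
  shows "measure_pmf.expectation (round H s) F = measure_pmf.expectation (round H s)
    (\<lambda>A. \<Sum>b\<in>V i. dog_agent.prob V Nb d T f M i H s b * F (A(i := b)))"
proof -
  interpret dog_agent V Nb d T f M i
    using dog_agentI[OF assms] .
  have "measure_pmf.expectation (round H s) F
      = measure_pmf.expectation (round H s) (\<lambda>A. \<Sum>b\<in>V i. pmf (dog_p V Nb d T f M i H s) b * F (A(i := b)))"
  proof (rule expectation_Pi_pmf_resample[OF finite_agents assms])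
    show "finite (set_pmf (dog_p V Nb d T f M j H s))" if "j \<in> N" for j
      using dog_agent.set_pmf_dog_p[OF dog_agentI[OF that]] finite_V[OF that] by simp
  qed (simp_all add: set_pmf_dog_p finite_actions)
  then show ?thesis
    by (simp add: pmf_dog_p cong: sum.cong)
qed

lemma expectation_resample:
  fixes F :: "(nat \<Rightarrow> nat \<Rightarrow> nat) \<Rightarrow> real"
  assumes "i \<in> N" "s \<in> {1..T}" "\<And>H H'. (\<And>t. t \<le> s \<Longrightarrow> H t = H' t) \<Longrightarrow> F H = F H'"
  shows "expect F = expect
    (\<lambda>H. \<Sum>b\<in>V i. dog_agent.prob V Nb d T f M i H s b * F (H(s := (H s)(i := b))))"
proof -
  interpret dog_agent V Nb d T f M i
    using dog_agentI[OF assms(1)] .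
  define G where "G H = (\<Sum>b\<in>V i. prob H s b * F (H(s := (H s)(i := b))))" for H
  have G_history: "G H = G H'" if "\<And>t. t \<le> s \<Longrightarrow> H t = H' t" for H H'
  proof -
    have "prob H s = prob H' s"
      using that by (intro ext prob_history_cong) auto
    moreover have "F (H(s := (H s)(i := b))) = F (H'(s := (H' s)(i := b))) " for b
      using that by (intro assms(3)) auto
    ultimately show ?thesis
      unfolding G_def by simp
  qed
  have "prob (H(s := A)) s = prob H s" for H A
    by (intro ext prob_history_cong) simp
  then have round_eq: "measure_pmf.expectation (round H s) (\<lambda>A. F (H(s := A)))
      = measure_pmf.expectation (round H s) (\<lambda>A. G (H(s := A)))" for H
    unfolding G_def using expectation_round_resample[OF assms(1), of H s "\<lambda>A. F (H(s := A))"] by simp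
  obtain r where s: "s = Suc r"
    using assms(2) by (cases s) auto
  have "measure_pmf.expectation (traj s) F = measure_pmf.expectation (traj s) G"
    using round_eq unfolding s expectation_traj_Suc by simp
  moreover have "measure_pmf.expectation (traj T) F = measure_pmf.expectation (traj s) F"
    by (rule expectation_traj_history[OF assms(3)]) (use assms(2) in auto)
  moreover have "measure_pmf.expectation (traj T) G = measure_pmf.expectation (traj s) G"
    by (rule expectation_traj_history[OF G_history]) (use assms(2) in auto)
  ultimately show ?thesis
    unfolding G_def by simp
qed

lemma expectation_own_action:
  fixes F :: "(nat \<Rightarrow> nat \<Rightarrow> nat) \<Rightarrow> nat \<Rightarrow> real"
  assumes "i \<in> N" "s \<in> {1..T}"
    and "\<And>H H' c. (\<And>t. t < s \<Longrightarrow> H t = H' t) \<Longrightarrow> (\<And>j. j \<noteq> i \<Longrightarrow> H s j = H' s j) \<Longrightarrow> F H c = F H' c"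
  shows "expect (\<lambda>H. F H (H s i))
    = expect (\<lambda>H. \<Sum>c\<in>V i. dog_agent.prob V Nb d T f M i H s c * F H c)"
proof -
  have "F H (H s i) = F H' (H' s i)" if "\<And>t. t \<le> s \<Longrightarrow> H t = H' t" for H H'
  proof -
    have "F H c = F H' c" for c
      using that by (intro assms(3)) auto
    then show ?thesis
      using that[of s] by simp
  qed
  note resample = expectation_resample[OF assms(1,2), of "\<lambda>H. F H (H s i)", OF this]
  moreover have "F (H(s := (H s)(i := c))) c = F H c" for H c
    by (rule assms(3)) auto
  ultimately show ?thesis
    by simp
qed

lemma dog_E_expect: "dog_E N V Nb d T f M F = expect (\<lambda>H. 1 / real T * (\<Sum>t\<in>{1..T}. F H t))"
  by (simp add: dog_E_def)

lemma dog_E_mono: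
  "(\<And>H t. H \<in> set_pmf (traj T) \<Longrightarrow> t \<in> {1..T} \<Longrightarrow> F H t \<le> G H t)
    \<Longrightarrow> dog_E N V Nb d T f M F \<le> dog_E N V Nb d T f M G"
  unfolding dog_E_expect by (intro expect_mono mult_left_mono sum_mono) auto

lemma dog_E_cong:
  "(\<And>H t. H \<in> set_pmf (traj T) \<Longrightarrow> t \<in> {1..T} \<Longrightarrow> F H t = G H t)
    \<Longrightarrow> dog_E N V Nb d T f M F = dog_E N V Nb d T f M G"
  unfolding dog_E_expect by (intro expect_cong arg_cong2[where f="(*)"] sum.cong) auto

lemma dog_E_const: "dog_E N V Nb d T f M (\<lambda>H t. g t) = 1 / real T * (\<Sum>t\<in>{1..T}. g t)"
  by (simp add: dog_E_expect)

lemma dog_E_add: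
  "dog_E N V Nb d T f M (\<lambda>H t. F H t + G H t) = dog_E N V Nb d T f M F + dog_E N V Nb d T f M G"
  by (simp add: dog_E_expect sum.distrib distrib_left)

lemma dog_E_diff:
  "dog_E N V Nb d T f M (\<lambda>H t. F H t - G H t) = dog_E N V Nb d T f M F - dog_E N V Nb d T f M G"
  by (simp add: dog_E_expect sum_subtractf right_diff_distrib)

lemma dog_E_scale: "dog_E N V Nb d T f M (\<lambda>H t. c * F H t) = c * dog_E N V Nb d T f M F"
  by (simp add: dog_E_expect sum_distrib_left[symmetric] mult.left_commute)

lemma dog_E_sum:
  "dog_E N V Nb d T f M (\<lambda>H t. \<Sum>j\<in>J. F j H t) = (\<Sum>j\<in>J. dog_E N V Nb d T f M (F j))"
  by (simp add: dog_E_expect sum_distrib_left) (rule sum.swap)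

end

section \<open>Regret of one agent\<close>

definition regret_rate :: "nat \<Rightarrow> nat \<Rightarrow> real" where
  "regret_rate K T = (1 + ln (real K)) * sqrt (real K / real T)"

lemma regret_rate_nonneg: "1 \<le> K \<Longrightarrow> 0 \<le> regret_rate K T"
  by (simp add: regret_rate_def)

lemma sqrt_ln_le_regret_rate:
  fixes K d T Vb :: nat
  assumes "2 \<le> K" "K + d \<le> Vb"
  shows "sqrt (ln K * (K + d) / T) \<le> regret_rate Vb T"
proof -
  have "ln K \<le> ln Vb"
    using assms by simp
  also have "\<dots> \<le> (1 + ln Vb)\<^sup>2"
    using assms by (simp add: power2_eq_square algebra_simps)
  finally have "ln K * (K + d) / T \<le> (1 + ln Vb)\<^sup>2 * Vb / T"
    using assms by (intro divide_right_mono mult_mono) auto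
  then have "sqrt (ln K * (K + d) / T) \<le> sqrt ((1 + ln Vb)\<^sup>2 * Vb / T)"
    by (rule real_sqrt_le_mono)
  also have "\<dots> = regret_rate Vb T"
    using assms by (simp add: regret_rate_def real_sqrt_mult real_sqrt_divide)
  finally show ?thesis .
qed

text \<open>The learning rate \<open>sqrt (ln K / ((K + d) * T))\<close> balances the two terms of the regret bound.\<close>

lemma learning_rate_bounds:
  fixes K d T Vb :: nat and e :: real
  assumes "2 \<le> K" "0 < T" "K + d \<le> Vb"
  defines "e \<equiv> sqrt (ln K / ((K + d) * T))"
  shows "0 < e" and "e * (d + 1) \<le> regret_rate Vb T"
    and "(ln K / e + 2 * e * T * (K + d)) / T \<le> 3 * regret_rate Vb T"
proof -
  define L Q where "L = ln K" and "Q = real (K + d) * T"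
  have "0 < L" "0 < Q"
    using assms(1,2) by (auto simp: L_def Q_def)
  have e: "e = sqrt L / sqrt Q"
    by (simp add: e_def L_def Q_def real_sqrt_divide)
  then show "0 < e"
    using \<open>0 < L\<close> \<open>0 < Q\<close> by simp
  have key: "sqrt (L * (K + d) / T) \<le> regret_rate Vb T"
    unfolding L_def using assms(1,3) by (rule sqrt_ln_le_regret_rate)
  have "e * (d + 1) = sqrt (L * (d + 1)\<^sup>2 / Q)"
    by (simp add: e real_sqrt_mult real_sqrt_divide)
  also have "\<dots> \<le> sqrt (L * (K + d)\<^sup>2 / Q)"
    using assms(1) \<open>0 < L\<close> \<open>0 < Q\<close> by (auto intro!: divide_right_mono mult_left_mono power_mono)
  also have "L * (K + d)\<^sup>2 / Q = L * (K + d) / T"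
    using assms(1) by (simp add: Q_def power2_eq_square)
  finally show "e * (d + 1) \<le> regret_rate Vb T"
    using key by simp
  have "L / e = sqrt L * sqrt Q" "e * Q = sqrt L * sqrt Q"
    using \<open>0 < L\<close> \<open>0 < Q\<close> by (simp_all add: e field_simps)
  moreover have "ln K / e + 2 * e * T * (K + d) = L / e + 2 * (e * Q)"
    by (simp add: L_def Q_def)
  ultimately have "(ln K / e + 2 * e * T * (K + d)) / T = 3 * (sqrt L * sqrt Q / T)"
    by simp
  also have "sqrt L * sqrt Q / T = sqrt (L * Q / (T * T))"
    using assms(2) by (simp add: real_sqrt_mult real_sqrt_divide)
  also have "L * Q / (T * T) = L * (K + d) / T"
    using assms(2) by (simp add: Q_def)
  finally show "(ln K / e + 2 * e * T * (K + d)) / T \<le> 3 * regret_rate Vb T"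
    using key by simp
qed

locale dog_regret = dog_system +
  fixes i :: nat and a :: nat
  assumes agent: "i \<in> N" and action: "a \<in> V i" and M_pos: "0 < M" and neighbours: "Nb i \<subseteq> N - {i}"
    and objectives: "\<And>t. t \<in> {1..T} \<Longrightarrow> normalized (f t) \<and> nondecreasing_on (ground N V) (f t)
      \<and> submodular_on (ground N V) (f t)"
    and singleton_le_M: "\<And>t x. t \<in> {1..T} \<Longrightarrow> x \<in> ground N V \<Longrightarrow> f t {x} \<le> M"

sublocale dog_regret \<subseteq> dog_agent V Nb d T f M i
  by (rule dog_agentI[OF agent])

context dog_regret
begin

lemma marg_bounds:
  assumes "H \<in> set_pmf (traj T)" "t \<in> {1..T}" "c \<in> V i"
  shows "0 \<le> marg (f t) (i, c) (Act (Nb i) (H t))" "marg (f t) (i, c) (Act (Nb i) (H t)) \<le> M"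
proof -
  have A: "Act (Nb i) (H t) \<subseteq> ground N V"
    using neighbours traj_actions[OF assms(1,2)] by (intro Act_subset_ground) auto
  have c: "(i, c) \<in> ground N V"
    using agent assms(3) by (simp add: ground_def)
  note f = objectives[OF assms(2)]
  show "0 \<le> marg (f t) (i, c) (Act (Nb i) (H t))"
    using f A c by (blast intro: marg_nonneg)
  have "marg (f t) (i, c) (Act (Nb i) (H t)) \<le> f t {(i, c)}"
    using f A c by (blast intro: marg_le_singleton)
  also have "\<dots> \<le> M"
    by (rule singleton_le_M[OF assms(2) c])
  finally show "marg (f t) (i, c) (Act (Nb i) (H t)) \<le> M" .
qed

lemma regular_history_traj:
  assumes "H \<in> set_pmf (traj T)"
  shows "regular_history H"
  unfolding regular_history_def
proof (intro ballI conjI)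
  fix s
  assume s: "s \<in> {1..T}"
  show "H s i \<in> V i"
    using traj_actions[OF assms s agent] .
  fix b
  assume b: "b \<in> V i"
  show "0 \<le> loss H s b" "loss H s b \<le> 1"
    using marg_bounds[OF assms s b] M_pos by (simp_all add: loss_def)
qed

lemma history_cong:
  assumes "\<And>t. t < s \<Longrightarrow> H t = H' t" "\<And>j. j \<noteq> i \<Longrightarrow> H s j = H' s j"
  shows "prob H s = prob H' s" "prob H (s + d i) = prob H' (s + d i)" "loss H s = loss H' s"
proof -
  show "prob H s = prob H' s" "prob H (s + d i) = prob H' (s + d i)"
    using assms(1) by (auto intro!: ext prob_history_cong)
  have "Act (Nb i) (H s) = Act (Nb i) (H' s)"
    using neighbours assms(2) by (intro Act_cong) auto
  then show "loss H s = loss H' s"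
    by (simp add: loss_def fun_eq_iff)
qed

lemma expect_played_action:
  fixes G :: "(nat \<Rightarrow> real) \<Rightarrow> (nat \<Rightarrow> real) \<Rightarrow> (nat \<Rightarrow> real) \<Rightarrow> nat \<Rightarrow> real"
  assumes "s \<in> {1..T}"
  shows "expect (\<lambda>H. G (prob H s) (prob H (s + d i)) (loss H s) (H s i))
    = expect (\<lambda>H. \<Sum>c\<in>V i. prob H s c * G (prob H s) (prob H (s + d i)) (loss H s) c)"
proof (rule expectation_own_action[OF agent assms])
  fix H H' :: "nat \<Rightarrow> nat \<Rightarrow> nat" and c
  assume "\<And>t. t < s \<Longrightarrow> H t = H' t" "\<And>j. j \<noteq> i \<Longrightarrow> H s j = H' s j"
  from history_cong[where s=s and H=H and H'=H', OF this]
  show "G (prob H s) (prob H (s + d i)) (loss H s) c = G (prob H' s) (prob H' (s + d i)) (loss H' s) c"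
    by simp
qed

lemma expect_loss_played:
  "s \<in> {1..T} \<Longrightarrow> expect (\<lambda>H. loss H s (H s i)) = expect (\<lambda>H. \<Sum>c\<in>V i. prob H s c * loss H s c)"
  using expect_played_action[of s "\<lambda>p q l c. l c"] by simp

lemma expect_loss_est_played:
  "s \<in> {1..T} \<Longrightarrow> expect (\<lambda>H. loss_est H s (H s i)) = expect (\<lambda>H. \<Sum>c\<in>V i. loss H s c)"
  using expect_played_action[of s "\<lambda>p q l c. l c / p c"] by (simp add: loss_est_def)

lemma expect_delayed_loss_played:
  "s \<in> {1..T} \<Longrightarrow> expect (\<lambda>H. prob H (s + d i) (H s i) * loss_est H s (H s i))
    = expect (\<lambda>H. \<Sum>c\<in>V i. prob H (s + d i) c * loss H s c)"
  using expect_played_action[of s "\<lambda>p q l c. q c * (l c / p c)"] by (simp add: loss_est_def)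

lemma expect_loss_est:
  assumes "s \<in> {1..T}"
  shows "expect (\<lambda>H. loss_est H s a) = expect (\<lambda>H. loss H s a)"
proof -
  have "(\<Sum>c\<in>V i. prob H s c * (if c = a then loss H s a / prob H s a else 0)) = loss H s a" for H
  proof -
    have "(\<Sum>c\<in>V i. prob H s c * (if c = a then loss H s a / prob H s a else 0))
        = (\<Sum>c\<in>V i. if c = a then loss H s a else 0)"
      by (rule sum.cong) auto
    then show ?thesis
      using finite_actions action by simp
  qed
  then show ?thesis
    using expect_played_action[OF assms, of "\<lambda>p q l c. if c = a then l a / p a else 0"]
    by (simp add: loss_est_def)
qed

end

context dog_regret
begin

lemma expected_round_regret_le:
  assumes "0 < \<eta>" "\<eta> * (real (d i) + 1) \<le> 1/4" "s \<in> {1..T}"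
  shows "expect (\<lambda>H. loss H s (H s i) - loss H s a)
    \<le> expect (\<lambda>H. prob H (s + d i) (H s i) * loss_est H s (H s i) - loss_est H s a) + 2 * \<eta> * d i"
proof -
  have "expect (\<lambda>H. loss H s (H s i)) = expect (\<lambda>H. \<Sum>c\<in>V i. prob H s c * loss H s c)"
    using expect_loss_played[OF assms(3)] .
  also have "\<dots> \<le> expect (\<lambda>H. (\<Sum>c\<in>V i. prob H (s + d i) c * loss H s c) + 2 * \<eta> * d i)"
  proof (rule expect_mono)
    fix H
    assume "H \<in> set_pmf (traj T)"
    then have "regular_history H"
      by (rule regular_history_traj)
    moreover from this have "\<And>b. b \<in> V i \<Longrightarrow> 0 \<le> loss H s b \<and> loss H s b \<le> 1"
      using assms(3) by (simp add: regular_history_def)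
    ultimately show "(\<Sum>c\<in>V i. prob H s c * loss H s c)
        \<le> (\<Sum>c\<in>V i. prob H (s + d i) c * loss H s c) + 2 * \<eta> * d i"
      using expected_loss_drift[OF _ assms(1,2), of H s "loss H s"] assms(3) by simp
  qed
  also have "\<dots> = expect (\<lambda>H. prob H (s + d i) (H s i) * loss_est H s (H s i)) + 2 * \<eta> * d i"
    using expect_delayed_loss_played[OF assms(3)] by simp
  finally show ?thesis
    using expect_loss_est[OF assms(3)] by simp
qed

lemma expect_loss_est_played_le: "s \<in> {1..T} \<Longrightarrow> expect (\<lambda>H. loss_est H s (H s i)) \<le> card (V i)"
  unfolding expect_loss_est_played
  using regular_history_traj sum_mono[of "V i" "loss _ s" "\<lambda>_. 1"]
  by (intro expect_mono[where G="\<lambda>H. real (card (V i))", simplified]) (auto simp: regular_history_def)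

lemma expected_regret_sum:
  assumes "0 < \<eta>" "\<eta> * (real (d i) + 1) \<le> 1/4"
  shows "(\<Sum>s\<in>{1..T}. expect (\<lambda>H. loss H s (H s i) - loss H s a))
    \<le> ln (card (V i)) / \<eta> + 2 * \<eta> * T * (card (V i) + d i)"
proof -
  have "(\<Sum>s\<in>{1..T}. expect (\<lambda>H. loss H s (H s i) - loss H s a))
      \<le> (\<Sum>s\<in>{1..T}. expect (\<lambda>H. prob H (s + d i) (H s i) * loss_est H s (H s i) - loss_est H s a)
        + 2 * \<eta> * d i)"
    using expected_round_regret_le[OF assms] by (rule sum_mono)
  also have "\<dots> = expect (\<lambda>H. \<Sum>s\<in>{1..T}. prob H (s + d i) (H s i) * loss_est H s (H s i) - loss_est H s a)
      + T * (2 * \<eta> * d i)"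
    by (simp add: sum.distrib)
  also have "\<dots> \<le> expect (\<lambda>H. ln (card (V i)) / \<eta> + 2 * \<eta> * (\<Sum>s\<in>{1..T}. loss_est H s (H s i)))
      + T * (2 * \<eta> * d i)"
    using potential_bound[OF regular_history_traj assms action] by (intro add_right_mono expect_mono)
  also have "\<dots> = ln (card (V i)) / \<eta> + 2 * \<eta> * (\<Sum>s\<in>{1..T}. expect (\<lambda>H. loss_est H s (H s i)))
      + T * (2 * \<eta> * d i)"
    by simp
  also have "\<dots> \<le> ln (card (V i)) / \<eta> + 2 * \<eta> * (\<Sum>s\<in>{1..T}. real (card (V i))) + T * (2 * \<eta> * d i)"
    using assms(1) expect_loss_est_played_le by (intro add_right_mono add_left_mono mult_left_mono sum_mono) auto
  finally show ?thesis
    by (simp add: algebra_simps)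
qed

abbreviation reward_gap :: "(nat \<Rightarrow> nat \<Rightarrow> nat) \<Rightarrow> nat \<Rightarrow> real" where
  "reward_gap \<equiv> \<lambda>H t. marg (f t) (i, a) (Act (Nb i) (H t)) - marg (f t) (i, H t i) (Act (Nb i) (H t))"

lemma dog_E_reward_gap_le_M: "0 < T \<Longrightarrow> dog_E N V Nb d T f M reward_gap \<le> M"
proof -
  assume "0 < T"
  have "dog_E N V Nb d T f M reward_gap \<le> dog_E N V Nb d T f M (\<lambda>H t. M)"
  proof (rule dog_E_mono)
    fix H t
    assume H: "H \<in> set_pmf (traj T)" and t: "t \<in> {1..T}"
    show "reward_gap H t \<le> M"
      using marg_bounds(2)[OF H t action] marg_bounds(1)[OF H t traj_actions[OF H t agent]] by linarith
  qed
  then show ?thesis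
    using \<open>0 < T\<close> by (simp add: dog_E_const)
qed

lemma dog_E_reward_gap_tuned:
  assumes "2 \<le> card (V i)" "0 < T" "card (V i) + d i \<le> Vb" "regret_rate Vb T \<le> 1/4"
  shows "dog_E N V Nb d T f M reward_gap \<le> 3 * M * regret_rate Vb T"
proof -
  note lr = learning_rate_bounds[OF assms(1-3)]
  have eta: "0 < \<eta>" "\<eta> * (real (d i) + 1) \<le> 1/4"
    using lr(1,2) assms(4) by (simp_all add: dog_eta_def add.commute)
  have "reward_gap H t = M * (loss H t (H t i) - loss H t a)" for H t
    using M_pos by (simp add: loss_def field_simps)
  then have "dog_E N V Nb d T f M reward_gap
      = M * ((\<Sum>s\<in>{1..T}. expect (\<lambda>H. loss H s (H s i) - loss H s a)) / T)"
    by (simp add: dog_E_expect sum_distrib_left[symmetric])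
  also have "\<dots> \<le> M * ((ln (card (V i)) / \<eta> + 2 * \<eta> * T * (card (V i) + d i)) / T)"
    using expected_regret_sum[OF eta] M_pos assms(2) by (intro mult_left_mono divide_right_mono) auto
  also have "\<dots> \<le> M * (3 * regret_rate Vb T)"
    using lr(3) M_pos by (intro mult_left_mono) (simp_all add: dog_eta_def)
  finally show ?thesis
    by simp
qed

lemma dog_E_reward_gap:
  assumes "0 < T" "card (V i) + d i \<le> Vb"
  shows "dog_E N V Nb d T f M reward_gap \<le> 4 * M * regret_rate Vb T"
proof -
  have "1 \<le> card (V i)"
    using finite_actions actions_nonempty by (simp add: Suc_le_eq card_gt_0_iff)
  then have rate: "0 \<le> regret_rate Vb T"
    using assms(2) by (intro regret_rate_nonneg) simp
  consider "1/4 < regret_rate Vb T" | "card (V i) = 1" | "2 \<le> card (V i)" "regret_rate Vb T \<le> 1/4"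
    using \<open>1 \<le> card (V i)\<close> by linarith
  then show ?thesis
  proof cases
    case 1
    then have "M * 1 \<le> M * (4 * regret_rate Vb T)"
      using M_pos by (intro mult_left_mono) auto
    then show ?thesis
      using dog_E_reward_gap_le_M[OF assms(1)] by (simp add: ac_simps)
  next
    case 2
    then obtain z where "V i = {z}"
      by (auto simp: card_Suc_eq)
    then have "dog_E N V Nb d T f M reward_gap = dog_E N V Nb d T f M (\<lambda>H t. 0)"
      using traj_actions[OF _ _ agent] action by (intro dog_E_cong) simp
    then show ?thesis
      using M_pos rate by (simp add: dog_E_const)
  next
    case 3
    have "3 * M * regret_rate Vb T \<le> 4 * M * regret_rate Vb T"
      using M_pos rate by (intro mult_right_mono) auto
    then show ?thesis
      using dog_E_reward_gap_tuned[OF 3(1) assms 3(2)] by linarith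
  qed
qed

end

section \<open>Approximation guarantees\<close>

lemma divide_one_plus_bound:
  fixes k X c D err opt :: real
  assumes "0 \<le> k" "0 \<le> err" "D \<le> err" "opt \<le> (1 + k) * X + k * c + D"
  shows "1 / (1 + k) * opt - k / (1 + k) * c - err \<le> X"
proof -
  have "err \<le> err * (1 + k)"
    using assms(1,2) by (simp add: algebra_simps)
  then have "D / (1 + k) \<le> err"
    using assms(1,3) by (simp add: divide_le_eq)
  moreover have "(opt - k * c - D) / (1 + k) \<le> X"
    using assms(1,4) by (simp add: pos_divide_le_eq algebra_simps)
  moreover have "(opt - k * c - D) / (1 + k) = 1 / (1 + k) * opt - k / (1 + k) * c - D / (1 + k)"
    by (simp add: diff_divide_distrib)
  ultimately show ?thesis
    by linarith
qed

locale dog_instance =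
  fixes N :: "nat set" and V :: "nat \<Rightarrow> nat set" and Nb :: "nat \<Rightarrow> nat set" and d :: "nat \<Rightarrow> nat"
    and T :: nat and f :: "nat \<Rightarrow> (nat \<times> nat) set \<Rightarrow> real" and M :: real and Astar :: "nat \<Rightarrow> nat"
  assumes setting: "dog_setting N V Nb d T f M Astar"

sublocale dog_instance \<subseteq> dog_system
  using setting unfolding dog_setting_def by unfold_locales auto

context dog_instance
begin

abbreviation \<kappa> :: real where
  "\<kappa> \<equiv> kappa N V T f"

abbreviation E :: "((nat \<Rightarrow> nat \<Rightarrow> nat) \<Rightarrow> nat \<Rightarrow> real) \<Rightarrow> real" where
  "E \<equiv> dog_E N V Nb d T f M"

abbreviation opt :: real where
  "opt \<equiv> 1 / real T * (\<Sum>t\<in>{1..T}. f t (Act N Astar))"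

abbreviation err :: real where
  "err \<equiv> 4 * M * real (card N) * regret_rate (Vd_bar N V d) T"

abbreviation regret :: "nat \<Rightarrow> (nat \<Rightarrow> nat \<Rightarrow> nat) \<Rightarrow> nat \<Rightarrow> real" where
  "regret j H t \<equiv> marg (f t) (j, Astar j) (Act (Nb j) (H t)) - marg (f t) (j, H t j) (Act (Nb j) (H t))"

lemma T_pos: "0 < T"
  and M_pos: "0 < M"
  and neighbourhoods: "\<forall>j\<in>N. Nb j \<subseteq> N - {j}"
  and Astar_actions: "\<forall>j\<in>N. Astar j \<in> V j"
  and objectives: "t \<in> {1..T} \<Longrightarrow> normalized (f t) \<and> nondecreasing_on (ground N V) (f t)
      \<and> submodular_on (ground N V) (f t) \<and> second_order_submodular_on (ground N V) (f t)"
  using setting unfolding dog_setting_def by auto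

lemma
  shows curvature_le_kappa: "t \<in> {1..T} \<Longrightarrow> curvature (ground N V) (f t) \<le> \<kappa>"
    and kappa_nonneg: "0 \<le> \<kappa>"
    and kappa_le_one: "\<kappa> \<le> 1"
proof -
  have "finite (ground N V)"
    using finite_agents finite_V by (intro finite_ground) auto
  moreover have "\<kappa> \<in> (\<lambda>t. curvature (ground N V) (f t)) ` {1..T}"
    unfolding kappa_def using T_pos by (intro Max_in) auto
  ultimately show "0 \<le> \<kappa>" "\<kappa> \<le> 1"
    using objectives curvature_nonneg curvature_le_one by auto
  show "t \<in> {1..T} \<Longrightarrow> curvature (ground N V) (f t) \<le> \<kappa>"
    unfolding kappa_def by (intro Max_ge) auto
qed

lemma sum_regret_le_err: "(\<Sum>j\<in>N. E (regret j)) \<le> err"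
proof -
  have "E (regret j) \<le> 4 * M * regret_rate (Vd_bar N V d) T" if "j \<in> N" for j
  proof -
    interpret dog_regret N V Nb d T f M j "Astar j"
      using setting that unfolding dog_setting_def by unfold_locales auto
    show ?thesis
      unfolding Vd_bar_def using finite_agents that by (intro dog_E_reward_gap[OF T_pos] Max_ge) auto
  qed
  then have "(\<Sum>j\<in>N. E (regret j)) \<le> (\<Sum>j\<in>N. 4 * M * regret_rate (Vd_bar N V d) T)"
    by (rule sum_mono)
  then show ?thesis
    by (simp add: algebra_simps)
qed

lemma err_nonneg: "0 \<le> err"
proof (cases "N = {}")
  case False
  then obtain j where "j \<in> N"
    by blast
  then have "1 \<le> card (V j) + d j" "card (V j) + d j \<le> Vd_bar N V d"
    using finite_V V_nonempty finite_agents unfolding Vd_bar_def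
    by (auto simp: Suc_le_eq card_gt_0_iff intro!: Max_ge)
  then show ?thesis
    using M_pos regret_rate_nonneg[of "Vd_bar N V d" T] by simp
qed simp

lemma opt_eq: "opt = E (\<lambda>H t. f t (Act N Astar))"
  by (simp add: dog_E_const)

lemma coin_guarantee:
  "1 / (1 + \<kappa>) * opt - \<kappa> / (1 + \<kappa>) * (\<Sum>j\<in>N. E (\<lambda>H t. coin N Nb (f t) j (H t))) - err
    \<le> E (\<lambda>H t. f t (Act N (H t)))"
proof (rule divide_one_plus_bound[OF kappa_nonneg err_nonneg sum_regret_le_err])
  have "opt \<le> E (\<lambda>H t. (1 + \<kappa>) * f t (Act N (H t)) + \<kappa> * (\<Sum>j\<in>N. coin N Nb (f t) j (H t))
      + (\<Sum>j\<in>N. regret j H t))"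
    unfolding opt_eq
  proof (rule dog_E_mono)
    fix H t
    assume "H \<in> set_pmf (traj T)" "t \<in> {1..T}"
    then show "f t (Act N Astar) \<le> (1 + \<kappa>) * f t (Act N (H t))
        + \<kappa> * (\<Sum>j\<in>N. coin N Nb (f t) j (H t)) + (\<Sum>j\<in>N. regret j H t)"
      using coin_round_bound[OF finite_agents _ _ _ _ _ neighbourhoods _ Astar_actions
          curvature_le_kappa kappa_le_one] objectives finite_V traj_actions
      by (simp add: algebra_simps)
  qed
  then show "opt \<le> (1 + \<kappa>) * E (\<lambda>H t. f t (Act N (H t))) + \<kappa> * (\<Sum>j\<in>N. E (\<lambda>H t. coin N Nb (f t) j (H t)))
      + (\<Sum>j\<in>N. E (regret j))"
    by (simp add: dog_E_add dog_E_scale dog_E_sum)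
qed

lemma centralized_guarantee:
  assumes "\<forall>j\<in>N. Nb j = N - {j}"
  shows "1 / (1 + \<kappa>) * opt - err \<le> E (\<lambda>H t. f t (Act N (H t)))"
proof -
  have "E (\<lambda>H t. coin N Nb (f t) j (H t)) = E (\<lambda>H t. 0)" if "j \<in> N" for j
    using assms that objectives by (intro dog_E_cong) (simp add: coin_def marg_def normalized_def)
  then show ?thesis
    using coin_guarantee by (simp add: dog_E_const)
qed

lemma decentralized_guarantee:
  assumes "\<forall>j\<in>N. Nb j = {}"
  shows "(1 - \<kappa>) * opt - err \<le> E (\<lambda>H t. f t (Act N (H t)))"
proof -
  have "E (\<lambda>H t. (1 - \<kappa>) * f t (Act N Astar) - (1 - \<kappa>) * (\<Sum>j\<in>N. regret j H t))
      \<le> E (\<lambda>H t. f t (Act N (H t)))"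
  proof (rule dog_E_mono)
    fix H t
    assume "H \<in> set_pmf (traj T)" "t \<in> {1..T}"
    then have "(1 - \<kappa>) * (f t (Act N Astar) - (\<Sum>j\<in>N. f t {(j, Astar j)} - f t {(j, H t j)}))
        \<le> f t (Act N (H t))"
      using decentralized_round_bound[OF finite_agents _ _ _ _ _ Astar_actions curvature_le_kappa kappa_le_one]
        objectives finite_V traj_actions by simp
    moreover have "(\<Sum>j\<in>N. regret j H t) = (\<Sum>j\<in>N. f t {(j, Astar j)} - f t {(j, H t j)})"
      using assms objectives \<open>t \<in> {1..T}\<close> by (intro sum.cong) (simp_all add: marg_empty)
    ultimately show "(1 - \<kappa>) * f t (Act N Astar) - (1 - \<kappa>) * (\<Sum>j\<in>N. regret j H t) \<le> f t (Act N (H t))"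
      by (simp add: right_diff_distrib)
  qed
  then have "(1 - \<kappa>) * opt - (1 - \<kappa>) * (\<Sum>j\<in>N. E (regret j)) \<le> E (\<lambda>H t. f t (Act N (H t)))"
    by (simp add: dog_E_diff dog_E_scale dog_E_sum dog_E_const)
  moreover have "(1 - \<kappa>) * (\<Sum>j\<in>N. E (regret j)) \<le> (1 - \<kappa>) * err"
    using sum_regret_le_err kappa_le_one by (intro mult_left_mono) auto
  moreover have "(1 - \<kappa>) * err \<le> err"
    using kappa_nonneg kappa_le_one err_nonneg by (intro mult_left_le_one_le) auto
  ultimately show ?thesis
    by linarith
qed

end

theorem theorem1:
  shows "\<exists>C>0. \<forall>N V Nb d T f M Astar. dog_setting N V Nb d T f M Astar \<longrightarrow>
    (let \<kappa> = kappa N V T f;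
         E = dog_E N V Nb d T f M;
         opt = (1 / real T) * (\<Sum>t\<in>{1..T}. f t (Act N Astar));
         err = C * M * real (card N) * (1 + ln (real (Vd_bar N V d)))
                 * sqrt (real (Vd_bar N V d) / real T)
     in E (\<lambda>H t. f t (Act N (H t)))
          \<ge> 1 / (1 + \<kappa>) * opt
            - \<kappa> / (1 + \<kappa>) * (\<Sum>i\<in>N. E (\<lambda>H t. coin N Nb (f t) i (H t)))
            - err
      \<and> ((\<forall>i\<in>N. Nb i = N - {i}) \<longrightarrow>
           E (\<lambda>H t. f t (Act N (H t))) \<ge> 1 / (1 + \<kappa>) * opt - err)
      \<and> ((\<forall>i\<in>N. Nb i = {}) \<longrightarrow>
           E (\<lambda>H t. f t (Act N (H t))) \<ge> (1 - \<kappa>) * opt - err))"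
proof (intro exI[of _ 4] conjI allI impI, goal_cases)
  case 1
  show ?case
    by simp
next
  case (2 N V Nb d T f M Astar)
  then interpret dog_instance N V Nb d T f M Astar
    by unfold_locales
  have "4 * M * real (card N) * (1 + ln (real (Vd_bar N V d))) * sqrt (real (Vd_bar N V d) / real T)
      = err"
    by (simp add: regret_rate_def)
  then show ?case
    unfolding Let_def using coin_guarantee centralized_guarantee decentralized_guarantee by presburger
qed

end
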